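(* Let $J$ be an indecomposable $W_n$-module in category $\mathcal{J}$. Then $J$ is a polynomial module. More precisely, there are $\lambda\in\mathbb{C}^n$ and a finite-dimensional subspace $U=J_\lambda$ of $J$ such that multiplication gives an isomorphism $\mathcal{F}(\mathbb{T}^n)\otimes U\cong J$. Define $D_j(s)\in\mathrm{End}\,U$ by $D_j(s)u=e_{-s}\,(d_j(s)u)$. Then for all $j=1,\dots,n$, $s,m\in\mathbb{Z}^n$ and $v\in U$, $$d_j(s)(e_m v)=e_{m+s}\big(m_j\,\mathrm{Id}+D_j(s)\big)v .$$ Moreover, the operators $D_j(s)$ depend polynomially on $s\in\mathbb{Z}^n$, and $D_j(0)=\lambda_j\,\mathrm{Id}$.
   Context: Let $n\ge 1$. Let $\mathcal{F}(\mathbb{T}^n)$ be the commutative algebra with $\mathbb{C}$-basis $e_m=e^{2\pi i m\cdot x}$, $m\in\mathbb{Z}^n$, and $e_me_k=e_{m+k}$. Let $W_n$ be the Lie algebra with $\mathbb{C}$-basis $d_j(s)=\frac{1}{2\pi i}e^{2\pi i s\cdot x}\frac{\partial}{\partial x^j}$, for $j=1,\dots,n$ and $s\in\mathbb{Z}^n$, and bracket $$[d_j(s),d_k(m)]=m_j\,d_k(s+m)-s_k\,d_j(s+m).$$ $W_n$ acts on $\mathcal{F}(\mathbb{T}^n)$ by derivations via $d_j(s)e_m=m_je_{m+s}$. Write $d_j=d_j(0)$. Category $\mathcal{J}$ consists of $W_n$-modules $J$ that are also $\mathcal{F}(\mathbb{T}^n)$-modules and satisfy: (J1) each $d_j$ acts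 diagonalizably on $J$; (J2) $J$ is a free $\mathcal{F}(\mathbb{T}^n)$-module of finite rank; (J3) $u(fw)=(uf)w+f(uw)$ for all $u\in W_n$, $f\in\mathcal{F}(\mathbb{T}^n)$, $w\in J$. For $\mu\in\mathbb{C}^n$, the weight space is $J_\mu=\{w\in J: d_jw=\mu_jw \text{ for all } j\}$. Submodules are subspaces invariant under both $W_n$ and $\mathcal{F}(\mathbb{T}^n)$. Indecomposable modules are nonzero. A module $J$ in $\mathcal{J}$ is a polynomial module if there is a basis $v_1,\dots,v_k$ of $J$ over $\mathcal{F}(\mathbb{T}^n)$ such that $$d_j(s)(e_mv_r)=\sum_{\ell}f_{jr\ell}(s,m)\,e_{m+s}v_\ell$$ with each $f_{jr\ell}$ a polynomial in $s,m\in\mathbb{Z}^n$. *)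

theory Defs
  imports "HOL-Analysis.Analysis"
begin

text \<open>An abstract complex vector space J is given by a type 'v with scalar
multiplication sc.  Z^n is int^'n (n = CARD('n) >= 1).  E m is the action of
e_m in F(T^n), D j s the action of d_j(s) in W_n.\<close>

definition F_basis ::
  "(complex \<Rightarrow> 'v::ab_group_add \<Rightarrow> 'v) \<Rightarrow> (int^'n \<Rightarrow> 'v \<Rightarrow> 'v) \<Rightarrow> 'v set \<Rightarrow> bool" where
  "F_basis sc E V \<longleftrightarrow>
     inj_on (\<lambda>(m, v). E m v) (UNIV \<times> V) \<and>
     \<not> module.dependent sc ((\<lambda>(m, v). E m v) ` (UNIV \<times> V)) \<and>
     module.span sc ((\<lambda>(m, v). E m v) ` (UNIV \<times> V)) = UNIV"

definition cat_J ::
  "(complex \<Rightarrow> 'v::ab_group_add \<Rightarrow> 'v) \<Rightarrow> (int^'n \<Rightarrow> 'v \<Rightarrow> 'v)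
     \<Rightarrow> ('n \<Rightarrow> int^'n \<Rightarrow> 'v \<Rightarrow> 'v) \<Rightarrow> bool" where
  "cat_J sc E D \<longleftrightarrow>
     vector_space sc \<and>
     (\<forall>m. Vector_Spaces.linear sc sc (E m)) \<and>
     (\<forall>j s. Vector_Spaces.linear sc sc (D j s)) \<and>
     \<comment> \<open>F(T^n)-module: e_0 acts as identity, e_m e_k = e_(m+k)\<close>
     (\<forall>w. E 0 w = w) \<and>
     (\<forall>m k w. E m (E k w) = E (m + k) w) \<and>
     \<comment> \<open>W_n-module: the bracket acts as commutator\<close>
     (\<forall>j k s m w. D j s (D k m w) - D k m (D j s w) =
        sc (of_int (m $ j)) (D k (s + m) w) - sc (of_int (s $ k)) (D j (s + m) w)) \<and>
     \<comment> \<open>(J3) on basis elements (general case by linearity)\<close>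
     (\<forall>j s m w. D j s (E m w) = sc (of_int (m $ j)) (E (m + s) w) + E m (D j s w)) \<and>
     \<comment> \<open>(J1) each d_j = d_j(0) is diagonalizable\<close>
     (\<forall>j. module.span sc {w. \<exists>c. D j 0 w = sc c w} = UNIV) \<and>
     \<comment> \<open>(J2) free F(T^n)-module of finite rank\<close>
     (\<exists>V. finite V \<and> F_basis sc E V)"

definition submod ::
  "(complex \<Rightarrow> 'v::ab_group_add \<Rightarrow> 'v) \<Rightarrow> (int^'n \<Rightarrow> 'v \<Rightarrow> 'v)
     \<Rightarrow> ('n \<Rightarrow> int^'n \<Rightarrow> 'v \<Rightarrow> 'v) \<Rightarrow> 'v set \<Rightarrow> bool" where
  "submod sc E D S \<longleftrightarrow> module.subspace sc S \<and>
     (\<forall>m. E m ` S \<subseteq> S) \<and> (\<forall>j s. D j s ` S \<subseteq> S)"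

definition indecomposable ::
  "(complex \<Rightarrow> 'v::ab_group_add \<Rightarrow> 'v) \<Rightarrow> (int^'n \<Rightarrow> 'v \<Rightarrow> 'v)
     \<Rightarrow> ('n \<Rightarrow> int^'n \<Rightarrow> 'v \<Rightarrow> 'v) \<Rightarrow> bool" where
  "indecomposable sc E D \<longleftrightarrow> (UNIV :: 'v set) \<noteq> {0} \<and>
     \<not> (\<exists>S T. submod sc E D S \<and> submod sc E D T \<and> S \<noteq> {0} \<and> T \<noteq> {0} \<and>
            S \<inter> T = {0} \<and> {x + y | x y. x \<in> S \<and> y \<in> T} = UNIV)"

definition monomial :: "int^'n \<Rightarrow> nat^'n \<Rightarrow> complex" where
  "monomial s \<alpha> = (\<Prod>j\<in>UNIV. of_int (s $ j) ^ (\<alpha> $ j))"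

definition poly_fun2 :: "(int^'n \<Rightarrow> int^'n \<Rightarrow> complex) \<Rightarrow> bool" where
  "poly_fun2 f \<longleftrightarrow> (\<exists>A :: ((nat^'n) \<times> (nat^'n)) set. \<exists>c. finite A \<and>
     (\<forall>s m. f s m = (\<Sum>(\<alpha>, \<beta>)\<in>A. c (\<alpha>, \<beta>) * monomial s \<alpha> * monomial m \<beta>)))"

definition polynomial_module ::
  "(complex \<Rightarrow> 'v::ab_group_add \<Rightarrow> 'v) \<Rightarrow> (int^'n \<Rightarrow> 'v \<Rightarrow> 'v)
     \<Rightarrow> ('n \<Rightarrow> int^'n \<Rightarrow> 'v \<Rightarrow> 'v) \<Rightarrow> bool" where
  "polynomial_module sc E D \<longleftrightarrow> (\<exists>vs :: 'v list. distinct vs \<and> F_basis sc E (set vs) \<and>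
     (\<exists>f :: 'n \<Rightarrow> nat \<Rightarrow> nat \<Rightarrow> int^'n \<Rightarrow> int^'n \<Rightarrow> complex.
        (\<forall>j r l. poly_fun2 (f j r l)) \<and>
        (\<forall>j s m r. r < length vs \<longrightarrow>
           D j s (E m (vs ! r)) = (\<Sum>l<length vs. sc (f j r l s m) (E (m + s) (vs ! l))))))"

definition weight_space ::
  "(complex \<Rightarrow> 'v::ab_group_add \<Rightarrow> 'v) \<Rightarrow> ('n \<Rightarrow> int^'n \<Rightarrow> 'v \<Rightarrow> 'v) \<Rightarrow> complex^'n \<Rightarrow> 'v set" where
  "weight_space sc D \<mu> = {w. \<forall>j. D j 0 w = sc (\<mu> $ j) w}"

definition Dop :: "(int^'n \<Rightarrow> 'v \<Rightarrow> 'v) \<Rightarrow> ('n \<Rightarrow> int^'n \<Rightarrow> 'v \<Rightarrow> 'v) \<Rightarrow> 'n \<Rightarrow> int^'n \<Rightarrow> 'v \<Rightarrow> 'v" where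
  "Dop E D j s u = E (- s) (D j s u)"

end

theory Submission
  imports Defs "HOL-Computational_Algebra.Fundamental_Theorem_Algebra"
begin

text \<open>Weight vectors of the commuting operators \<open>d\<^sub>j\<close> are independent and, by (J1), span \<open>J\<close>. The
  weight spaces in one coset \<open>\<mu> + \<int>\<^sup>n\<close> span a submodule complemented by the span of all the others,
  so indecomposability puts all weights into a single coset \<open>\<lambda> + \<int>\<^sup>n\<close>. Multiplication by \<open>e\<^sub>m\<close> maps
  \<open>U = J\<^sub>\<lambda>\<close> onto \<open>J\<^sub>\<lambda>\<^sub>+\<^sub>m\<close>, so any basis of \<open>U\<close> is an \<open>\<F>(\<T>\<^sup>n)\<close>-basis of \<open>J\<close>, and \<open>U\<close> is finite
  dimensional because \<open>J\<close> has finite rank.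

  The operators \<open>D\<^sub>j(s) = e\<^sub>-\<^sub>s d\<^sub>j(s)\<close> preserve \<open>U\<close>, and along an axis \<open>\<tau>(x) = D\<^sub>i(x e\<^sub>i)\<close> satisfies
  \<open>[\<tau>(x), \<tau>(y)] = (y - x) \<tau>(x + y) - y \<tau>(y) + x \<tau>(x)\<close>. The polynomials \<open>p\<close> with \<open>p(1) = 0\<close>
  whose shift operator \<open>p(S)\<close>, \<open>(S g)(x) = g(x + 1)\<close>, annihilates \<open>\<tau>\<close> on \<open>U\<close> form an ideal that is
  stable under division by \<open>x\<close> and under \<open>p \<mapsto> (x - 1) x p'\<close>, and it is nonzero because \<open>End U\<close> is
  finite dimensional. Hence it contains \<open>(x - 1)\<^sup>N\<close>: the \<open>N\<close>-th finite difference of \<open>\<tau>\<close> vanishes.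
  Commutators spread this to every \<open>D\<^sub>j\<close>, every direction and every base point, and Newton's forward
  difference formula then exhibits \<open>D\<^sub>j(s)\<close> as a polynomial in \<open>s\<close>.\<close>

text \<open>A copy of \<open>vector_space\<close>: constants defined inside \<open>vector_space\<close> itself would be
  shadowed by their copies in its global interpretation \<open>real_vector\<close>.\<close>

locale vspace = vector_space sc for sc :: "'a::field_char_0 \<Rightarrow> 'v::ab_group_add \<Rightarrow> 'v"
begin

sublocale endo: vector_space_pair sc sc ..

abbreviation lin :: "('v \<Rightarrow> 'v) \<Rightarrow> bool" where
  "lin \<equiv> Vector_Spaces.linear sc sc"

lemma linI:
  assumes "\<And>x y. f (x + y) = f x + f y" "\<And>c x. f (sc c x) = sc c (f x)"
  shows "lin f"
  using assms vector_space_axioms by (simp add: Vector_Spaces.linear_iff)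

lemma lin_compose:
  fixes f g :: "'v \<Rightarrow> 'v"
  shows "lin f \<Longrightarrow> lin g \<Longrightarrow> lin (\<lambda>x. f (g x))"
  using Vector_Spaces.linear_compose[of sc sc g sc f] by (simp add: o_def)

lemma lin_image_span:
  fixes f :: "'v \<Rightarrow> 'v"
  assumes "lin f" "\<And>x. x \<in> G \<Longrightarrow> f x \<in> span G'" "x \<in> span G"
  shows "f x \<in> span G'"
  using assms(3)
proof (induction rule: span_induct_alt)
  case base
  then show ?case using endo.linear_0[OF assms(1)] span_zero by simp
next
  case (step c x y)
  then show ?case using assms(1,2) by (simp add: endo.linear_add endo.linear_scale span_add span_scale)
qed

text \<open>\<open>shift_eval g a p\<close> is \<open>(p(S) g)(a)\<close> for the shift \<open>(S g)(x) = g (x + 1)\<close>; in particular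
  \<open>[:-1, 1:] ^ N\<close> is the \<open>N\<close>-th forward difference.\<close>

definition shift_eval :: "(int \<Rightarrow> 'v) \<Rightarrow> int \<Rightarrow> 'a poly \<Rightarrow> 'v" where
  "shift_eval g a p = (\<Sum>t\<le>degree p. sc (coeff p t) (g (a + int t)))"

lemma shift_eval_bound:
  assumes "degree p \<le> K"
  shows "shift_eval g a p = (\<Sum>t\<le>K. sc (coeff p t) (g (a + int t)))"
  unfolding shift_eval_def
  by (rule sum.mono_neutral_left) (use assms coeff_eq_0 in \<open>auto simp: not_le\<close>)

lemma shift_eval_0 [simp]: "shift_eval g a 0 = 0"
  by (simp add: shift_eval_def)

lemma shift_eval_add: "shift_eval g a (p + q) = shift_eval g a p + shift_eval g a q"
proof -
  have "degree (p + q) \<le> max (degree p) (degree q)" by (rule degree_add_le) auto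
  then show ?thesis
    by (simp add: shift_eval_bound[of _ "max (degree p) (degree q)"] sum.distrib scale_left_distrib)
qed

lemma shift_eval_diff: "shift_eval g a (p - q) = shift_eval g a p - shift_eval g a q"
proof -
  have "degree (p - q) \<le> max (degree p) (degree q)" by (rule degree_diff_le) auto
  then show ?thesis
    by (simp add: shift_eval_bound[of _ "max (degree p) (degree q)"] sum_subtractf scale_left_diff_distrib)
qed

lemma shift_eval_smult: "shift_eval g a (smult c p) = sc c (shift_eval g a p)"
  by (simp add: shift_eval_bound[of _ "degree p"] shift_eval_def scale_sum_right)

lemma shift_eval_pCons: "shift_eval g a (pCons c p) = sc c (g a) + shift_eval g (a + 1) p"
proof -
  have "shift_eval g a (pCons c p) = (\<Sum>t\<le>Suc (degree p). sc (coeff (pCons c p) t) (g (a + int t)))"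
    by (rule shift_eval_bound) simp
  also have "\<dots> = sc c (g a) + (\<Sum>t\<le>degree p. sc (coeff p t) (g (a + 1 + int t)))"
    by (subst sum.atMost_Suc_shift) (simp add: add_ac)
  finally show ?thesis by (simp add: shift_eval_def)
qed

lemma shift_eval_pCons_0: "shift_eval g a (pCons 0 p) = shift_eval g (a + 1) p"
  by (simp add: shift_eval_pCons)

lemma shift_eval_const: "shift_eval g a [:c:] = sc c (g a)"
  by (simp add: shift_eval_pCons)

lemma shift_eval_1: "shift_eval g a 1 = g a"
  by (simp add: shift_eval_def)

lemma shift_eval_monom: "shift_eval g a (monom c i) = sc c (g (a + int i))"
  by (induction i arbitrary: a) (auto simp: shift_eval_const monom_Suc shift_eval_pCons_0 add_ac monom_0)

lemma shift_eval_cong: "(\<And>x. g1 x = g2 x) \<Longrightarrow> shift_eval g1 a p = shift_eval g2 a p"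
  by (simp add: shift_eval_def)

lemma shift_eval_linear: "lin f \<Longrightarrow> shift_eval (\<lambda>x. f (g x)) a p = f (shift_eval g a p)"
  by (simp add: shift_eval_def endo.linear_sum endo.linear_scale)

lemma shift_eval_zero_fun: "shift_eval (\<lambda>x. 0) a p = 0"
  by (simp add: shift_eval_def)

lemma shift_eval_const_fun: "shift_eval (\<lambda>x. v) a p = sc (poly p 1) v"
  by (simp add: shift_eval_def poly_altdef scale_sum_left)

lemma shift_eval_add_fun:
  "shift_eval (\<lambda>x. g1 x + g2 x) a p = shift_eval g1 a p + shift_eval g2 a p"
  by (simp add: shift_eval_def sum.distrib scale_right_distrib)

lemma shift_eval_diff_fun:
  "shift_eval (\<lambda>x. g1 x - g2 x) a p = shift_eval g1 a p - shift_eval g2 a p"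
  by (simp add: shift_eval_def sum_subtractf scale_right_diff_distrib)

lemma shift_eval_scale_fun: "shift_eval (\<lambda>x. sc c (g x)) a p = sc c (shift_eval g a p)"
  by (simp add: shift_eval_def scale_sum_right scale_left_commute mult.commute)

lemma shift_eval_translate: "shift_eval (\<lambda>y. g (x + y)) b q = shift_eval g (x + b) q"
  by (simp add: shift_eval_def add.assoc)

lemma shift_eval_swap:
  "shift_eval (\<lambda>x. shift_eval (\<lambda>y. F x y) b q) a p = shift_eval (\<lambda>y. shift_eval (\<lambda>x. F x y) a p) b q"
  unfolding shift_eval_def scale_sum_right
  by (subst sum.swap) (simp add: scale_left_commute mult.commute)

lemma shift_eval_mult: "shift_eval g a (p * q) = shift_eval (\<lambda>b. shift_eval g b p) a q"
proof (induction q arbitrary: a rule: pCons_induct)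
  case (pCons c q)
  have "p * pCons c q = smult c p + pCons 0 (p * q)"
    by (simp add: mult_pCons_right)
  then show ?case
    by (simp add: shift_eval_add shift_eval_smult shift_eval_pCons_0 pCons.IH shift_eval_pCons)
qed simp

lemma shift_eval_times_arg:
  "shift_eval (\<lambda>x. sc (of_int x) (g x)) a p = shift_eval g a (smult (of_int a) p + pCons 0 (pderiv p))"
proof (induction p arbitrary: a rule: pCons_induct)
  case (pCons c p)
  have e: "smult (of_int a) (pCons c p) + pCons 0 (pderiv (pCons c p))
     = pCons (of_int a * c) (smult (of_int (a + 1)) p + pCons 0 (pderiv p))"
    by (simp add: pderiv_pCons algebra_simps smult_add_left)
  show ?case
    unfolding e shift_eval_pCons pCons.IH[symmetric] by (simp add: scale_scale mult.commute)
qed simp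

lemma shift_eval_forward_difference:
  "shift_eval (\<lambda>x. g (x + 1) - g x) a ([:-1, 1:] ^ N) = shift_eval g a ([:-1, 1:] ^ Suc N)"
proof -
  have "shift_eval (\<lambda>x. g (x + 1)) a ([:-1, 1:] ^ N) = shift_eval g (a + 1) ([:-1, 1:] ^ N)"
    unfolding shift_eval_def by (simp add: add_ac)
  also have "\<dots> = shift_eval g a (pCons 0 ([:-1, 1:] ^ N))"
    by (simp add: shift_eval_pCons_0)
  finally have "shift_eval (\<lambda>x. g (x + 1)) a ([:-1, 1:] ^ N) = shift_eval g a (pCons 0 ([:-1, 1:] ^ N))" .
  moreover have "[:-1, 1:] ^ Suc N = pCons 0 ([:-1, 1:] ^ N) - ([:-1, 1:] ^ N :: 'a poly)"
    by (simp add: power_Suc2 mult_pCons_right)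
  ultimately show ?thesis by (simp add: shift_eval_diff_fun shift_eval_diff)
qed

lemma shift_eval_power_mono:
  assumes "\<forall>b. shift_eval g b ([:-1, 1:] ^ N) = 0" "N \<le> M"
  shows "shift_eval g a ([:-1, 1:] ^ M) = 0"
proof -
  have "shift_eval g a ([:-1, 1:] ^ N * [:-1, 1:] ^ (M - N)) = 0"
    using assms(1) by (simp add: shift_eval_mult shift_eval_zero_fun)
  then show ?thesis
    using assms(2) by (simp flip: power_add)
qed

lemma int_periodic_eq_0:
  fixes h :: "int \<Rightarrow> 'v"
  assumes "h 0 = 0" "\<And>x. h (x + 1) = h x"
  shows "h x = 0"
proof (induction x rule: int_induct[of _ 0])
  case (step2 i)
  then show ?case using assms(2)[of "i - 1"] by simp
qed (use assms in auto)

lemma newton_forward_difference: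
  assumes "\<forall>a. shift_eval g a ([:-1, 1:] ^ N) = 0"
  shows "g x = (\<Sum>b<N. sc (of_int x gchoose b) (shift_eval g 0 ([:-1, 1:] ^ b)))"
  using assms
proof (induction N arbitrary: g x)
  case 0
  then show ?case by (simp add: shift_eval_1)
next
  case (Suc N)
  define c where "c b = shift_eval g 0 ([:-1, 1:] ^ b)" for b
  define H where "H y = (\<Sum>b<Suc N. sc (of_int y gchoose b) (c b))" for y
  have "\<forall>a. shift_eval (\<lambda>y. g (y + 1) - g y) a ([:-1, 1:] ^ N) = 0"
    using Suc.prems by (simp add: shift_eval_forward_difference)
  from Suc.IH[OF this]
  have dg: "g (y + 1) - g y = (\<Sum>b<N. sc (of_int y gchoose b) (c (Suc b)))" for y
    by (simp add: c_def shift_eval_forward_difference)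
  have H_step: "H (y + 1) - H y = g (y + 1) - g y" for y
  proof -
    have "H (y + 1) - H y =
        (\<Sum>b<N. sc ((of_int y + 1) gchoose Suc b) (c (Suc b)) - sc (of_int y gchoose Suc b) (c (Suc b)))"
      unfolding H_def sum.lessThan_Suc_shift by (simp add: sum_subtractf)
    also have "\<dots> = (\<Sum>b<N. sc (of_int y gchoose b) (c (Suc b)))"
      by (intro sum.cong refl) (simp add: gbinomial_Suc_Suc scale_left_distrib)
    finally show ?thesis using dg by simp
  qed
  have "g y - H y = 0" for y
  proof (rule int_periodic_eq_0)
    show "g 0 - H 0 = 0"
      unfolding H_def sum.lessThan_Suc_shift by (simp add: c_def shift_eval_1)
    show "g (x + 1) - H (x + 1) = g x - H x" for x
      using H_step[of x] by (simp add: algebra_simps)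
  qed
  then have "g x = H x"
    by (simp only: right_minus_eq)
  then show ?case
    by (simp only: H_def c_def)
qed

end

lemma root_of_poly_dvd_shifted_pderiv:
  fixes h :: "'a::field_char_0 poly"
  assumes h: "h \<noteq> 0" "poly h 0 \<noteq> 0" "h dvd [:-1, 1:] * pCons 0 (pderiv h)"
    and r: "poly h r = 0"
  shows "r = 1"
proof (rule ccontr)
  assume r1: "r \<noteq> 1"
  have r0: "r \<noteq> 0" using r h(2) by auto
  have "degree h \<noteq> 0"
  proof
    assume "degree h = 0"
    then obtain c where "h = [:c:]" by (metis degree_eq_zeroE)
    then show False using r h(1) by auto
  qed
  then have "pderiv h \<noteq> 0" by (simp add: pderiv_eq_0_iff)
  define X where "X = [:-1, 1:] * ([:0, 1:] * pderiv h)"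
  have X_nz: "X \<noteq> 0" using \<open>pderiv h \<noteq> 0\<close> unfolding X_def
    by (metis mult_eq_0_iff pCons_eq_0_iff one_neq_zero)
  have "order r h \<le> order r X"
    using h(3) by (intro dvd_imp_order_le[OF X_nz]) (simp add: X_def)
  also have "order r X = order r [:-1, 1:] + (order r [:0, 1:] + order r (pderiv h))"
    using X_nz unfolding X_def by (subst order_mult, simp, subst order_mult, auto)
  also have "order r [:-1, 1:] = 0" using r1 order_root[of "[:-1, 1:]" r] by auto
  also have "order r [:0, 1:] = 0" using r0 order_root[of "[:0, 1:]" r] by auto
  also have "order r h = Suc (order r (pderiv h))" by (rule order_pderiv[OF h(1) r])
  finally show False by simp
qed

lemma poly_only_root_one:
  fixes h :: "complex poly"
  assumes "h \<noteq> 0" "\<And>r. poly h r = 0 \<Longrightarrow> r = 1"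
  obtains c k where "c \<noteq> 0" "h = smult c ([:-1, 1:] ^ k)"
proof -
  obtain q where q: "h = [:-1, 1:] ^ order 1 h * q" "\<not> [:-1, 1:] dvd q"
    using order_decomp[OF assms(1), of 1] by auto
  have "degree q = 0"
  proof (rule ccontr)
    assume "degree q \<noteq> 0"
    then have "\<not> constant (poly q)" by (simp add: constant_degree)
    then obtain z where z: "poly q z = 0"
      using fundamental_theorem_of_algebra by blast
    then have "poly h z = 0" by (subst q(1)) simp
    then have "z = 1" by (rule assms(2))
    then show False using z q(2) by (simp add: poly_eq_0_iff_dvd)
  qed
  then obtain c where "q = [:c:]" by (metis degree_eq_zeroE)
  with q(1) assms(1) show thesis
    by (intro that[of c "order 1 h"]) auto
qed

text \<open>An ideal of \<open>\<complex>[x]\<close> that is stable under division by \<open>x\<close> and under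
  \<open>p \<mapsto> (x - 1) x p'\<close> is generated by a power of \<open>x - 1\<close>: its generator has no root \<open>r \<noteq> 1\<close>, since
  the order of a root drops under \<open>p'\<close>.\<close>

lemma stable_poly_ideal_contains_power:
  fixes Q :: "complex poly set"
  assumes mult: "\<And>p q. p \<in> Q \<Longrightarrow> p * q \<in> Q"
    and diff: "\<And>p q. p \<in> Q \<Longrightarrow> q \<in> Q \<Longrightarrow> p - q \<in> Q"
    and div_x: "\<And>p. pCons 0 p \<in> Q \<Longrightarrow> p \<in> Q"
    and pderiv: "\<And>p. p \<in> Q \<Longrightarrow> [:-1, 1:] * pCons 0 (pderiv p) \<in> Q"
    and nonzero: "\<exists>p\<in>Q. p \<noteq> 0"
  shows "\<exists>N. [:-1, 1:] ^ N \<in> Q"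
proof -
  define d where "d = (LEAST d. \<exists>p\<in>Q. p \<noteq> 0 \<and> degree p = d)"
  have "\<exists>p\<in>Q. p \<noteq> 0 \<and> degree p = d"
    unfolding d_def by (rule LeastI_ex) (use nonzero in blast)
  then obtain h where h: "h \<in> Q" "h \<noteq> 0" "degree h = d" by auto
  have h_min: "degree h \<le> degree p" if "p \<in> Q" "p \<noteq> 0" for p
    unfolding h(3) d_def by (rule Least_le) (use that in blast)
  have h_dvd: "h dvd p" if "p \<in> Q" for p
  proof (rule ccontr)
    assume "\<not> h dvd p"
    then have mod_nz: "p mod h \<noteq> 0" by (simp add: mod_eq_0_iff_dvd)
    have "p mod h \<in> Q"
      using diff[OF that mult[OF h(1), of "p div h"]] by (simp add: minus_mult_div_eq_mod)
    then have "degree h \<le> degree (p mod h)" using h_min mod_nz by blast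
    moreover have "degree (p mod h) < degree h" by (rule degree_mod_less'[OF h(2) mod_nz])
    ultimately show False by simp
  qed
  have "poly h 0 \<noteq> 0"
  proof
    assume "poly h 0 = 0"
    obtain c h' where hc: "h = pCons c h'" by (cases h)
    with \<open>poly h 0 = 0\<close> have h': "h = pCons 0 h'" by simp
    with h have "h' \<in> Q" "h' \<noteq> 0" by (auto intro: div_x)
    with h_min have "degree h \<le> degree h'" by blast
    with h' \<open>h' \<noteq> 0\<close> show False by simp
  qed
  then have "r = 1" if "poly h r = 0" for r
    using root_of_poly_dvd_shifted_pderiv[OF h(2) _ h_dvd[OF pderiv[OF h(1)]] that] by blast
  then obtain c k where "c \<noteq> 0" "h = smult c ([:-1, 1:] ^ k)"
    using poly_only_root_one[OF h(2)] by blast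
  then have "[:-1, 1:] ^ k = h * [:1 / c:]" by simp
  then show ?thesis using mult[OF h(1)] by metis
qed

lemma underdetermined_linear_system:
  fixes x :: "'i \<Rightarrow> 'k \<Rightarrow> 'a::field"
  assumes "finite K" "finite I" "card K < card I"
  shows "\<exists>c. (\<exists>i\<in>I. c i \<noteq> 0) \<and> (\<forall>k\<in>K. (\<Sum>i\<in>I. c i * x i k) = 0)"
  using assms
proof (induction K arbitrary: I x rule: finite_induct)
  case empty
  then have "I \<noteq> {}" by auto
  then show ?case by (intro exI[of _ "\<lambda>_. 1"]) auto
next
  case (insert k K)
  show ?case
  proof (cases "\<forall>i\<in>I. x i k = 0")
    case True
    from insert.IH[of I x] insert.prems insert.hyps obtain c where
      c: "\<exists>i\<in>I. c i \<noteq> 0" "\<forall>k\<in>K. (\<Sum>i\<in>I. c i * x i k) = 0" by auto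
    show ?thesis using c True by (intro exI[of _ c]) auto
  next
    case False
    then obtain i0 where i0: "i0 \<in> I" "x i0 k \<noteq> 0" by auto
    define I' where "I' = I - {i0}"
    define y where "y i k' = x i k' - (x i k / x i0 k) * x i0 k'" for i k'
    have cI': "card I' = card I - 1" using i0 insert.prems by (simp add: I'_def)
    have "card K < card I'" using cI' insert.prems insert.hyps by auto
    from insert.IH[of I' y] this insert.prems obtain c' where
      c': "\<exists>i\<in>I'. c' i \<noteq> 0" "\<forall>k\<in>K. (\<Sum>i\<in>I'. c' i * y i k) = 0" by (auto simp: I'_def)
    define c where "c i = (if i = i0 then - (\<Sum>j\<in>I'. c' j * x j k) / x i0 k else c' i)" for i
    have key: "(\<Sum>i\<in>I. c i * x i k') = (\<Sum>i\<in>I'. c' i * y i k')" for k'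
    proof -
      have "(\<Sum>i\<in>I. c i * x i k') = c i0 * x i0 k' + (\<Sum>i\<in>I'. c i * x i k')"
        using i0 insert.prems by (simp add: I'_def sum.remove)
      also have "(\<Sum>i\<in>I'. c i * x i k') = (\<Sum>i\<in>I'. c' i * x i k')"
        by (rule sum.cong) (auto simp: c_def I'_def)
      also have "c i0 * x i0 k' = - (\<Sum>j\<in>I'. c' j * (x j k / x i0 k) * x i0 k')"
        by (simp add: c_def sum_divide_distrib sum_distrib_right sum_negf)
      finally show ?thesis
        by (simp add: y_def sum_subtractf algebra_simps)
    qed
    have yk: "y i k = 0" for i using i0 by (simp add: y_def)
    show ?thesis
    proof (intro exI[of _ c] conjI)
      show "\<exists>i\<in>I. c i \<noteq> 0" using c'(1) by (auto simp: c_def I'_def)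
      show "\<forall>k'\<in>insert k K. (\<Sum>i\<in>I. c i * x i k') = 0"
        using c'(2) by (auto simp: key yk)
    qed
  qed
qed

context vspace
begin

lemma linear_maps_dependent:
  assumes B: "finite B" "independent B" "span B = U"
    and T: "\<And>i. lin (T i)" "\<And>i u. u \<in> U \<Longrightarrow> T i u \<in> U"
    and I: "finite I" "card B * card B < card I"
  shows "\<exists>c. (\<exists>i\<in>I. c i \<noteq> 0) \<and> (\<forall>u\<in>U. (\<Sum>i\<in>I. sc (c i) (T i u)) = 0)"
proof -
  define x where "x i bb = representation B (T i (fst bb)) (snd bb)" for i bb
  obtain c where c: "\<exists>i\<in>I. c i \<noteq> 0" "\<forall>k\<in>B \<times> B. (\<Sum>i\<in>I. c i * x i k) = 0"
    using underdetermined_linear_system[of "B \<times> B" I x] B(1) I by (auto simp: card_cartesian_product)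
  define Y where "Y u = (\<Sum>i\<in>I. sc (c i) (T i u))" for u
  have lin_Y: "lin Y"
    unfolding Y_def by (intro endo.linear_compose_sum ballI endo.linear_compose_scale_right T(1))
  have T_B: "T i b \<in> span B" if "b \<in> B" for i b
    using that B(3) T(2) span_base[of b B] by auto
  have "Y b = 0" if b: "b \<in> B" for b
  proof -
    have "representation B (Y b) b' = 0" for b'
    proof (cases "b' \<in> B")
      case True
      have "representation B (Y b) b' = (\<Sum>i\<in>I. c i * x i (b, b'))"
        unfolding Y_def x_def using T_B[OF b] B(2)
        by (simp add: representation_sum span_scale representation_scale)
      also have "\<dots> = 0" using c(2) b True by auto
      finally show ?thesis .
    qed (use representation_ne_zero in blast)
    moreover have "Y b \<in> span B" unfolding Y_def using T_B[OF b] by (intro span_sum span_scale) auto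
    then have "Y b = (\<Sum>b' | representation B (Y b) b' \<noteq> 0. sc (representation B (Y b) b') b')"
      using sum_nonzero_representation_eq[OF B(2)] by auto
    ultimately show ?thesis by simp
  qed
  then have "Y u = 0" if "u \<in> U" for u
    using endo.linear_eq_0_on_span[OF lin_Y] that B(3) by blast
  with c(1) show ?thesis unfolding Y_def by blast
qed

end

text \<open>The relation \<open>\<tau>_commutator\<close> is the one satisfied by \<open>x \<mapsto> D\<^sub>i(x e\<^sub>i)\<close> on the weight space
  \<open>J\<^sub>\<lambda>\<close>, read off from the Witt bracket \<open>[d\<^sub>i(x e\<^sub>i), d\<^sub>i(y e\<^sub>i)] = (y - x) d\<^sub>i((x + y) e\<^sub>i)\<close>.\<close>

locale witt_family = vspace sc for sc :: "complex \<Rightarrow> 'v::ab_group_add \<Rightarrow> 'v" +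
  fixes U :: "'v set" and \<tau> :: "int \<Rightarrow> 'v \<Rightarrow> 'v" and Bs :: "'v set"
  assumes subspace_U: "subspace U"
    and linear_\<tau>: "lin (\<tau> x)"
    and \<tau>_in_U: "u \<in> U \<Longrightarrow> \<tau> x u \<in> U"
    and \<tau>_commutator: "u \<in> U \<Longrightarrow> \<tau> x (\<tau> y u) - \<tau> y (\<tau> x u) =
       sc (of_int (y - x)) (\<tau> (x + y) u) - sc (of_int y) (\<tau> y u) + sc (of_int x) (\<tau> x u)"
    and finite_Bs: "finite Bs" and independent_Bs: "independent Bs" and span_Bs: "span Bs = U"
begin

definition tau_poly :: "int \<Rightarrow> complex poly \<Rightarrow> 'v \<Rightarrow> 'v" where
  "tau_poly a p u = shift_eval (\<lambda>x. \<tau> x u) a p"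

lemma tau_poly_linear: "lin (tau_poly a p)"
  unfolding tau_poly_def shift_eval_def
  by (intro endo.linear_compose_sum ballI endo.linear_compose_scale_right
      lin_compose[OF _ linear_\<tau>] linear_ident)

lemma tau_poly_in_U: "u \<in> U \<Longrightarrow> tau_poly a p u \<in> U"
  unfolding tau_poly_def shift_eval_def
  by (intro subspace_sum[OF subspace_U] subspace_scale[OF subspace_U] \<tau>_in_U)

lemma tau_poly_smult: "tau_poly c (smult d P) u = sc d (tau_poly c P u)"
  by (simp add: tau_poly_def shift_eval_smult)

lemma tau_poly_sum: "tau_poly c (\<Sum>i\<in>I. P i) u = (\<Sum>i\<in>I. tau_poly c (P i) u)"
  by (induction I rule: infinite_finite_induct) (simp_all add: tau_poly_def shift_eval_add)

lemma tau_poly_mult: "tau_poly a (p * q) u = shift_eval (\<lambda>b. tau_poly b p u) a q"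
  by (simp add: tau_poly_def shift_eval_mult)

lemma tau_poly_diff: "tau_poly c (P1 - P2) u = tau_poly c P1 u - tau_poly c P2 u"
  by (simp add: tau_poly_def shift_eval_diff)

definition arg_mult :: "int \<Rightarrow> complex poly \<Rightarrow> complex poly" where
  "arg_mult a p = smult (of_int a) p + pCons 0 (pderiv p)"

lemma tau_poly_shift_mult: "shift_eval (\<lambda>x. tau_poly (x + b) W u) a p = tau_poly (a + b) (W * p) u"
proof -
  have "tau_poly (a + b) (W * p) u = shift_eval (\<lambda>c. shift_eval (\<lambda>y. \<tau> y u) c W) (b + a) p"
    unfolding tau_poly_def by (simp add: shift_eval_mult add.commute)
  also have "\<dots> = shift_eval (\<lambda>x. shift_eval (\<lambda>y. \<tau> y u) (b + x) W) a p"
    by (rule shift_eval_translate[symmetric])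
  finally show ?thesis by (simp add: tau_poly_def add.commute)
qed

lemma tau_poly_commutator:
  assumes u: "u \<in> U"
  shows "tau_poly a p (tau_poly b q u) - tau_poly b q (tau_poly a p u) =
    tau_poly (a + b) (arg_mult b q * p - q * arg_mult a p) u - sc (poly p 1) (tau_poly b (arg_mult b q) u)
      + sc (poly q 1) (tau_poly a (arg_mult a p) u)"
proof -
  have l1: "tau_poly a p (tau_poly b q u) = shift_eval (\<lambda>x. shift_eval (\<lambda>y. \<tau> x (\<tau> y u)) b q) a p"
    unfolding tau_poly_def by (rule shift_eval_cong) (simp add: shift_eval_linear[OF linear_\<tau>, symmetric])
  have l2: "tau_poly b q (tau_poly a p u) = shift_eval (\<lambda>x. shift_eval (\<lambda>y. \<tau> y (\<tau> x u)) b q) a p"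
    unfolding tau_poly_def by (subst shift_eval_swap) (simp add: shift_eval_linear[OF linear_\<tau>, symmetric])
  have inner: "shift_eval (\<lambda>y. \<tau> x (\<tau> y u) - \<tau> y (\<tau> x u)) b q =
      tau_poly (x + b) (arg_mult b q) u - sc (of_int x) (tau_poly (x + b) q u) - tau_poly b (arg_mult b q) u
      + sc (poly q 1) (sc (of_int x) (\<tau> x u))" for x
  proof -
    have "shift_eval (\<lambda>y. \<tau> x (\<tau> y u) - \<tau> y (\<tau> x u)) b q =
      shift_eval (\<lambda>y. sc (of_int y) (\<tau> (x + y) u) - sc (of_int x) (\<tau> (x + y) u)
         - sc (of_int y) (\<tau> y u) + sc (of_int x) (\<tau> x u)) b q"
      by (rule shift_eval_cong) (simp add: \<tau>_commutator[OF u] scale_left_diff_distrib add.commute)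
    also have "\<dots> = shift_eval (\<lambda>y. sc (of_int y) (\<tau> (x + y) u)) b q
         - sc (of_int x) (shift_eval (\<lambda>y. \<tau> (x + y) u) b q)
         - shift_eval (\<lambda>y. sc (of_int y) (\<tau> y u)) b q + sc (poly q 1) (sc (of_int x) (\<tau> x u))"
      by (simp add: shift_eval_add_fun shift_eval_diff_fun shift_eval_scale_fun shift_eval_const_fun)
    also have "shift_eval (\<lambda>y. sc (of_int y) (\<tau> (x + y) u)) b q = tau_poly (x + b) (arg_mult b q) u"
      unfolding shift_eval_times_arg tau_poly_def arg_mult_def by (rule shift_eval_translate)
    also have "shift_eval (\<lambda>y. \<tau> (x + y) u) b q = tau_poly (x + b) q u"
      unfolding tau_poly_def by (rule shift_eval_translate)
    also have "shift_eval (\<lambda>y. sc (of_int y) (\<tau> y u)) b q = tau_poly b (arg_mult b q) u"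
      unfolding shift_eval_times_arg tau_poly_def arg_mult_def ..
    finally show ?thesis .
  qed
  have "tau_poly a p (tau_poly b q u) - tau_poly b q (tau_poly a p u) =
     shift_eval (\<lambda>x. shift_eval (\<lambda>y. \<tau> x (\<tau> y u) - \<tau> y (\<tau> x u)) b q) a p"
    unfolding l1 l2 by (simp add: shift_eval_diff_fun)
  also have "\<dots> = shift_eval (\<lambda>x. tau_poly (x + b) (arg_mult b q) u) a p
      - shift_eval (\<lambda>x. sc (of_int x) (tau_poly (x + b) q u)) a p
      - sc (poly p 1) (tau_poly b (arg_mult b q) u)
      + sc (poly q 1) (shift_eval (\<lambda>x. sc (of_int x) (\<tau> x u)) a p)"
    unfolding inner
    by (simp only: shift_eval_add_fun shift_eval_diff_fun shift_eval_scale_fun shift_eval_const_fun)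
  also have "shift_eval (\<lambda>x. sc (of_int x) (tau_poly (x + b) q u)) a p = tau_poly (a + b) (q * arg_mult a p) u"
    unfolding shift_eval_times_arg arg_mult_def by (rule tau_poly_shift_mult)
  also have "shift_eval (\<lambda>x. sc (of_int x) (\<tau> x u)) a p = tau_poly a (arg_mult a p) u"
    unfolding shift_eval_times_arg tau_poly_def arg_mult_def ..
  finally show ?thesis
    by (simp add: tau_poly_shift_mult tau_poly_diff)
qed

text \<open>The normalisation \<open>p(1) = 0\<close> kills the two boundary terms of \<open>tau_poly_commutator\<close>.\<close>

definition annihilator :: "complex poly set" where
  "annihilator = {p. poly p 1 = 0 \<and> (\<forall>a. \<forall>u\<in>U. tau_poly a p u = 0)}"

lemma annihilatorD: "p \<in> annihilator \<Longrightarrow> u \<in> U \<Longrightarrow> tau_poly a p u = 0"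
  by (simp add: annihilator_def)

lemma annihilator_mult: "p \<in> annihilator \<Longrightarrow> p * q \<in> annihilator"
  by (simp add: annihilator_def tau_poly_mult shift_eval_def)

lemma annihilator_diff: "p \<in> annihilator \<Longrightarrow> q \<in> annihilator \<Longrightarrow> p - q \<in> annihilator"
  by (simp add: annihilator_def tau_poly_diff)

lemma annihilator_div_x: "pCons 0 p \<in> annihilator \<Longrightarrow> p \<in> annihilator"
  unfolding annihilator_def
proof safe
  assume h: "poly (pCons 0 p) 1 = 0" "\<forall>a. \<forall>u\<in>U. tau_poly a (pCons 0 p) u = 0"
  then show "poly p 1 = 0" by simp
  fix a u assume "u \<in> U"
  then have "tau_poly (a - 1) (pCons 0 p) u = 0" using h by auto
  then show "tau_poly a p u = 0" by (simp add: tau_poly_def shift_eval_pCons_0)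
qed

lemma annihilator_pderiv:
  assumes p: "p \<in> annihilator"
  shows "[:-1, 1:] * pCons 0 (pderiv p) \<in> annihilator"
proof -
  define q0 :: "complex poly" where "q0 = [:-1, 1:]"
  have pp1: "poly p 1 = 0" using p by (simp add: annihilator_def)
  have "tau_poly a (q0 * pCons 0 (pderiv p)) u = 0" if u: "u \<in> U" for a u
  proof -
    have br: "tau_poly a p (tau_poly 0 q0 u) - tau_poly 0 q0 (tau_poly a p u) =
      tau_poly (a + 0) (arg_mult 0 q0 * p - q0 * arg_mult a p) u - sc (poly p 1) (tau_poly 0 (arg_mult 0 q0) u)
      + sc (poly q0 1) (tau_poly a (arg_mult a p) u)"
      by (rule tau_poly_commutator[OF u])
    have lhs: "tau_poly a p (tau_poly 0 q0 u) - tau_poly 0 q0 (tau_poly a p u) = 0"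
      using annihilatorD[OF p tau_poly_in_U[OF u]] annihilatorD[OF p u] endo.linear_0[OF tau_poly_linear] by simp
    have e: "arg_mult 0 q0 * p - q0 * arg_mult a p =
        p * arg_mult 0 q0 - smult (of_int a) (p * q0) - q0 * pCons 0 (pderiv p)"
      by (simp add: arg_mult_def algebra_simps)
    have pq0: "poly q0 1 = 0" by (simp add: q0_def)
    have "0 = tau_poly a (arg_mult 0 q0 * p - q0 * arg_mult a p) u"
      using br unfolding lhs pp1 pq0 by simp
    also have "\<dots> = tau_poly a (p * arg_mult 0 q0) u - sc (of_int a) (tau_poly a (p * q0) u)
        - tau_poly a (q0 * pCons 0 (pderiv p)) u"
      by (simp only: e tau_poly_diff tau_poly_smult)
    finally have "0 = tau_poly a (p * arg_mult 0 q0) u - sc (of_int a) (tau_poly a (p * q0) u)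
        - tau_poly a (q0 * pCons 0 (pderiv p)) u" .
    also have "tau_poly a (p * arg_mult 0 q0) u = 0" using annihilatorD[OF annihilator_mult[OF p] u] .
    also have "tau_poly a (p * q0) u = 0" using annihilatorD[OF annihilator_mult[OF p] u] .
    finally show ?thesis by simp
  qed
  moreover have "poly (q0 * pCons 0 (pderiv p)) 1 = 0" by (simp add: q0_def)
  ultimately show ?thesis unfolding q0_def annihilator_def by auto
qed

text \<open>The operators \<open>\<tau>(i) - \<tau>(0)\<close> for \<open>i = 1, \<dots>, (card Bs)\<^sup>2 + 1\<close> on \<open>U\<close> are linearly dependent.\<close>

lemma exists_poly_annihilating_at_0: "\<exists>f. f \<noteq> 0 \<and> poly f 1 = 0 \<and> (\<forall>u\<in>U. tau_poly 0 f u = 0)"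
proof -
  define I where "I = {1..card Bs * card Bs + 1}"
  have lin: "lin (\<lambda>u. \<tau> (int i) u - \<tau> 0 u)" for i
    by (intro endo.linear_compose_sub linear_\<tau>)
  have in_U: "\<tau> (int i) u - \<tau> 0 u \<in> U" if "u \<in> U" for i u
    using that by (intro subspace_diff[OF subspace_U] \<tau>_in_U)
  have "\<exists>c. (\<exists>i\<in>I. c i \<noteq> 0) \<and> (\<forall>u\<in>U. (\<Sum>i\<in>I. sc (c i) (\<tau> (int i) u - \<tau> 0 u)) = 0)"
    by (rule linear_maps_dependent[OF finite_Bs independent_Bs span_Bs,
          where T = "\<lambda>i u. \<tau> (int i) u - \<tau> 0 u"]) (use lin in_U in \<open>simp_all add: I_def\<close>)
  then obtain c where c: "\<exists>i\<in>I. c i \<noteq> 0" "\<forall>u\<in>U. (\<Sum>i\<in>I. sc (c i) (\<tau> (int i) u - \<tau> 0 u)) = 0"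
    by blast
  define f where "f = (\<Sum>i\<in>I. monom (c i) i - [:c i:])"
  have "poly f 1 = 0" by (simp add: f_def poly_sum poly_monom)
  moreover have "f \<noteq> 0"
  proof -
    obtain i0 where i0: "i0 \<in> I" "c i0 \<noteq> 0" using c(1) by auto
    have "coeff (monom (c i) i - [:c i:]) i0 = (if i = i0 then c i else 0)" for i
      using i0 by (cases i0) (auto simp: coeff_monom I_def)
    then have "coeff f i0 = (\<Sum>i\<in>I. (if i = i0 then c i else 0))"
      by (simp only: f_def coeff_sum)
    also have "\<dots> = c i0" using i0 by (simp add: I_def)
    finally show ?thesis using i0 by auto
  qed
  moreover have "tau_poly 0 f u = (\<Sum>i\<in>I. sc (c i) (\<tau> (int i) u - \<tau> 0 u))" for u
    by (simp only: f_def tau_poly_sum tau_poly_diff)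
      (simp add: tau_poly_def shift_eval_monom shift_eval_const scale_right_diff_distrib)
  then have "\<forall>u\<in>U. tau_poly 0 f u = 0"
    using c(2) by simp
  ultimately show ?thesis by blast
qed

text \<open>Commuting \<open>tau_poly a g\<close>, which vanishes on \<open>U\<close>, with \<open>tau_poly c g\<close> leaves only the term
  \<open>(c - a) tau_poly (a + c) (g\<^sup>2)\<close>.\<close>

lemma tau_poly_square_vanishes:
  assumes g: "poly g 1 = 0" "\<And>u. u \<in> U \<Longrightarrow> tau_poly a g u = 0" and "a \<noteq> c" "u \<in> U"
  shows "tau_poly (a + c) (g * g) u = 0"
proof -
  have "arg_mult c g * g - g * arg_mult a g = smult (of_int c - of_int a) (g * g)"
    by (simp add: arg_mult_def algebra_simps smult_diff_left)
  then have "0 = sc (of_int c - of_int a) (tau_poly (a + c) (g * g) u)"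
    using tau_poly_commutator[OF \<open>u \<in> U\<close>, of a g c g] g tau_poly_in_U[OF \<open>u \<in> U\<close>] \<open>u \<in> U\<close>
      endo.linear_0[OF tau_poly_linear]
    by (simp add: tau_poly_smult)
  then show ?thesis using \<open>a \<noteq> c\<close> by simp
qed

lemma annihilator_nonzero: "\<exists>p\<in>annihilator. p \<noteq> 0"
proof -
  obtain f where f: "f \<noteq> 0" "poly f 1 = 0" "\<forall>u\<in>U. tau_poly 0 f u = 0"
    using exists_poly_annihilating_at_0 by blast
  define g where "g = f * f"
  have g: "tau_poly b g u = 0" if "b \<noteq> 0" "u \<in> U" for b u
    using tau_poly_square_vanishes[of f 0 b u] f(2,3) that unfolding g_def by simp
  have "poly g 1 = 0" using f(2) by (simp add: g_def)
  have "tau_poly t (g * g) u = 0" if "u \<in> U" for t u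
  proof -
    define a :: int where "a = (if t = 2 then -1 else 1)"
    have "a \<noteq> 0" "a \<noteq> t - a" by (auto simp: a_def)
    then have "tau_poly (a + (t - a)) (g * g) u = 0"
      by (intro tau_poly_square_vanishes \<open>poly g 1 = 0\<close> g \<open>u \<in> U\<close>)
    then show ?thesis by simp
  qed
  moreover have "poly (g * g) 1 = 0" "g * g \<noteq> 0" using f by (simp_all add: g_def)
  ultimately show ?thesis unfolding annihilator_def by blast
qed

lemma finite_difference_vanishes: "\<exists>N. \<forall>a. \<forall>u\<in>U. tau_poly a ([:-1, 1:] ^ N) u = 0"
proof -
  have "\<exists>N. [:-1, 1:] ^ N \<in> annihilator"
    by (rule stable_poly_ideal_contains_power[OF annihilator_mult annihilator_diff annihilator_div_x
          annihilator_pderiv annihilator_nonzero])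
  then show ?thesis by (auto simp: annihilator_def)
qed

end

context vspace
begin

lemma eigenvectors_sum_eq_0:
  fixes L :: "'j \<Rightarrow> 'v \<Rightarrow> 'v" and g :: "'b \<Rightarrow> 'j \<Rightarrow> 'a"
  assumes lin: "\<And>j. lin (L j)" and fin: "finite A"
    and eig: "\<And>a j. a \<in> A \<Longrightarrow> L j (y a) = sc (g a j) (y a)"
    and inj: "inj_on g A" and sum0: "(\<Sum>a\<in>A. y a) = 0"
  shows "\<forall>a\<in>A. y a = 0"
  using fin eig inj sum0
proof (induction A arbitrary: y rule: finite_induct)
  case empty
  then show ?case by simp
next
  case (insert a0 A)
  have zA: "\<forall>a\<in>A. y a = 0"
  proof
    fix a assume aA: "a \<in> A"
    have "sc (g a j - g a0 j) (y a) = 0" for j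
    proof -
      define y' where "y' a = sc (g a j - g a0 j) (y a)" for a
      have e': "L j' (y' a) = sc (g a j') (y' a)" if "a \<in> A" for a j'
        using insert.prems(1)[of a j'] that
        by (simp add: y'_def endo.linear_add[OF lin] endo.linear_scale[OF lin] scale_left_commute)
      have "L j (\<Sum>a\<in>insert a0 A. y a) - sc (g a0 j) (\<Sum>a\<in>insert a0 A. y a) = 0"
        using insert.prems(3) endo.linear_0[OF lin] by simp
      then have "(\<Sum>a\<in>insert a0 A. L j (y a) - sc (g a0 j) (y a)) = 0"
        by (simp add: endo.linear_sum[OF lin] scale_sum_right sum_subtractf)
      then have "(\<Sum>a\<in>A. y' a) = 0"
        using insert.hyps insert.prems(1)
        by (simp add: y'_def scale_left_diff_distrib)
      moreover have "inj_on g A" using insert.prems(2) by (auto simp: inj_on_def)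
      ultimately have "\<forall>a\<in>A. y' a = 0"
        using insert.IH[of y'] e' insert.hyps by blast
      then show ?thesis using aA by (simp add: y'_def)
    qed
    moreover have "g a \<noteq> g a0" using insert.prems(2) insert.hyps aA by (auto simp: inj_on_def)
    then obtain j where "g a j \<noteq> g a0 j" by auto
    ultimately show "y a = 0" by auto
  qed
  then have "y a0 = 0" using insert.prems(3) insert.hyps by simp
  with zA show ?case by simp
qed

lemma joint_eigenvector_split:
  fixes L :: "'j \<Rightarrow> 'v \<Rightarrow> 'v"
  assumes lin: "\<And>j. lin (L j)" and diag: "span {w. \<exists>c. L i w = sc c w} = UNIV"
    and comm: "\<And>j w. L i (L j w) = L j (L i w)"
    and v: "\<forall>j\<in>S. \<exists>c. L j v = sc c v"
  shows "v \<in> span {w. \<forall>j\<in>insert i S. \<exists>c. L j w = sc c w}"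
proof -
  let ?Ei = "{w. \<exists>c. L i w = sc c w}"
  have "v \<in> span ?Ei" using diag by auto
  then obtain t r where t: "finite t" "t \<subseteq> ?Ei" "v = (\<Sum>x\<in>t. sc (r x) x)"
    unfolding span_explicit by auto
  define eo where "eo x = (SOME c. L i x = sc c x)" for x
  have eo: "L i x = sc (eo x) x" if "x \<in> t" for x
    unfolding eo_def using t(2) that by (auto intro: someI)
  define y where "y l = (\<Sum>x\<in>{x\<in>t. eo x = l}. sc (r x) x)" for l
  have vsum: "v = (\<Sum>l\<in>eo ` t. y l)"
    unfolding y_def t(3) by (rule sum.image_gen[OF t(1)])
  have yeig: "L i (y l) = sc l (y l)" for l
    unfolding y_def using eo
    by (simp add: endo.linear_sum[OF lin] endo.linear_add[OF lin] endo.linear_scale[OF lin]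
        scale_sum_right scale_left_commute mult.commute)
  have "y l \<in> {w. \<forall>j\<in>insert i S. \<exists>c. L j w = sc c w}" if l: "l \<in> eo ` t" for l
  proof (safe)
    show "\<exists>c. L i (y l) = sc c (y l)" using yeig by blast
  next
    fix j assume j: "j \<in> S"
    obtain cj where cj: "L j v = sc cj v" using v j by blast
    define z where "z l = L j (y l) - sc cj (y l)" for l
    have "(\<Sum>l\<in>eo ` t. z l) = L j v - sc cj v"
      unfolding z_def vsum by (simp add: sum_subtractf endo.linear_sum[OF lin] scale_sum_right)
    then have zs: "(\<Sum>l\<in>eo ` t. z l) = 0" using cj by simp
    have zeig: "L i (z l) = sc l (z l)" for l
      unfolding z_def using yeig
      by (simp add: endo.linear_diff[OF lin] endo.linear_add[OF lin] endo.linear_scale[OF lin] comm[of j]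
          scale_right_diff_distrib scale_left_commute)
    have "\<forall>l\<in>eo ` t. z l = 0"
      by (rule eigenvectors_sum_eq_0[of "\<lambda>_::unit. L i" "eo ` t" z "\<lambda>l _. l"])
         (use t(1) zs zeig lin in \<open>auto simp: inj_on_def fun_eq_iff\<close>)
    then have "z l = 0" using l by auto
    then show "\<exists>c. L j (y l) = sc c (y l)" unfolding z_def by auto
  qed
  then show ?thesis unfolding vsum by (intro span_sum span_base) auto
qed

lemma joint_eigenvectors_span:
  fixes L :: "'j \<Rightarrow> 'v \<Rightarrow> 'v"
  assumes "finite S" and lin: "\<And>j. lin (L j)" and diag: "\<And>j. span {w. \<exists>c. L j w = sc c w} = UNIV"
    and comm: "\<And>i j w. L i (L j w) = L j (L i w)"
  shows "span {w. \<forall>j\<in>S. \<exists>c. L j w = sc c w} = UNIV"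
  using \<open>finite S\<close>
proof (induction S rule: finite_induct)
  case (insert i S)
  have "UNIV = span {w. \<forall>j\<in>S. \<exists>c. L j w = sc c w}" using insert.IH by simp
  also have "\<dots> \<subseteq> span {w. \<forall>j\<in>insert i S. \<exists>c. L j w = sc c w}"
    by (rule span_minimal) (use joint_eigenvector_split[OF lin diag comm] in auto)
  finally show ?case by auto
qed simp

end

definition of_int_vec :: "int^'n \<Rightarrow> complex^'n" where
  "of_int_vec m = (\<chi> j. of_int (m $ j))"

lemma of_int_vec_add: "of_int_vec (m + k) = of_int_vec m + of_int_vec k"
  by (simp add: of_int_vec_def vec_eq_iff)

lemma of_int_vec_0[simp]: "of_int_vec 0 = 0"
  by (simp add: of_int_vec_def vec_eq_iff)

lemma of_int_vec_minus: "of_int_vec (- m) = - of_int_vec m"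
  by (simp add: of_int_vec_def vec_eq_iff)

lemma of_int_vec_eq_iff: "of_int_vec m = of_int_vec k \<longleftrightarrow> m = k"
  by (simp add: of_int_vec_def vec_eq_iff)

lemma of_int_vec_nth[simp]: "of_int_vec m $ j = of_int (m $ j)"
  by (simp add: of_int_vec_def)

locale J_module =
  fixes sc :: "complex \<Rightarrow> 'v::ab_group_add \<Rightarrow> 'v"
    and E :: "int^'n \<Rightarrow> 'v \<Rightarrow> 'v" and D :: "'n \<Rightarrow> int^'n \<Rightarrow> 'v \<Rightarrow> 'v"
  assumes cat_J: "cat_J sc E D"
begin

sublocale vspace sc
  using cat_J by (simp add: cat_J_def vspace_def)

lemma linear_E: "lin (E m)" using cat_J by (simp add: cat_J_def)
lemma linear_D: "lin (D j s)" using cat_J by (simp add: cat_J_def)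
lemma E_0[simp]: "E 0 w = w" using cat_J by (simp add: cat_J_def)
lemma E_E: "E m (E k w) = E (m + k) w" using cat_J by (simp add: cat_J_def)
lemma D_commutator: "D j s (D k m w) - D k m (D j s w) =
        sc (of_int (m $ j)) (D k (s + m) w) - sc (of_int (s $ k)) (D j (s + m) w)"
  using cat_J by (simp add: cat_J_def)
lemma D_E: "D j s (E m w) = sc (of_int (m $ j)) (E (m + s) w) + E m (D j s w)"
  using cat_J by (simp add: cat_J_def)
lemma D0_diagonalizable: "span {w. \<exists>c. D j 0 w = sc c w} = UNIV"
  using cat_J by (simp add: cat_J_def)
lemma exists_F_basis: "\<exists>V. finite V \<and> F_basis sc E V"
  using cat_J by (simp add: cat_J_def)

lemma E_neg_E: "E (- m) (E m w) = w" by (simp add: E_E)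
lemma E_E_neg: "E m (E (- m) w) = w" by (simp add: E_E)
lemma E_eq_iff: "E m x = E m y \<longleftrightarrow> x = y" by (metis E_neg_E)

abbreviation W :: "complex^'n \<Rightarrow> 'v set" where
  "W \<mu> \<equiv> weight_space sc D \<mu>"

lemma weight_space_iff: "w \<in> W \<mu> \<longleftrightarrow> (\<forall>j. D j 0 w = sc (\<mu> $ j) w)"
  by (simp add: weight_space_def)

lemma subspace_weight_space: "subspace (W \<mu>)"
  unfolding subspace_def weight_space_def
  by (auto simp: endo.linear_0[OF linear_D] endo.linear_add[OF linear_D] endo.linear_scale[OF linear_D]
      scale_right_distrib scale_left_commute mult.commute)

lemma zero_in_weight_space[simp]: "0 \<in> W \<mu>" by (rule subspace_0[OF subspace_weight_space])

lemma E_weight_space: "w \<in> W \<mu> \<Longrightarrow> E m w \<in> W (\<mu> + of_int_vec m)"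
  unfolding weight_space_iff
  by (simp add: D_E endo.linear_add[OF linear_E] endo.linear_scale[OF linear_E] scale_left_distrib add.commute)

lemma D_weight_space: assumes "w \<in> W \<mu>" shows "D k s w \<in> W (\<mu> + of_int_vec s)"
  unfolding weight_space_iff
proof
  fix j
  have "D j 0 (D k s w) - D k s (D j 0 w) = sc (of_int (s $ j)) (D k s w)"
    using D_commutator[of j 0 k s w] by simp
  then show "D j 0 (D k s w) = sc ((\<mu> + of_int_vec s) $ j) (D k s w)"
    using assms unfolding weight_space_iff
    by (simp add: endo.linear_add[OF linear_D] endo.linear_scale[OF linear_D] scale_left_distrib algebra_simps)
qed

lemma D0_commute: "D i 0 (D j 0 w) = D j 0 (D i 0 w)"
  using D_commutator[of i 0 j 0 w] by simp

lemma weight_vectors_sum_eq_0: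
  assumes "finite A" "\<And>a. a \<in> A \<Longrightarrow> y a \<in> W (\<mu> a)" "inj_on \<mu> A" "(\<Sum>a\<in>A. y a) = 0"
  shows "\<forall>a\<in>A. y a = 0"
proof (rule eigenvectors_sum_eq_0[of "\<lambda>j. D j 0" A y "\<lambda>a j. \<mu> a $ j"])
  show "inj_on (\<lambda>a j. \<mu> a $ j) A" using assms(3) by (auto simp: inj_on_def vec_eq_iff fun_eq_iff)
qed (use assms linear_D weight_space_iff in auto)

lemma span_weight_spaces_sum:
  assumes "x \<in> span (\<Union>\<mu>\<in>M. W \<mu>)"
  shows "\<exists>F y. finite F \<and> F \<subseteq> M \<and> (\<forall>\<mu>\<in>F. y \<mu> \<in> W \<mu>) \<and> x = (\<Sum>\<mu>\<in>F. y \<mu>)"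
  using assms
proof (induction rule: span_induct_alt)
  case base
  then show ?case by (intro exI[of _ "{}"]) auto
next
  case (step c x z)
  then obtain F y where F: "finite F" "F \<subseteq> M" "\<forall>\<mu>\<in>F. y \<mu> \<in> W \<mu>" "z = (\<Sum>\<mu>\<in>F. y \<mu>)" by blast
  from step obtain \<mu>0 where m0: "\<mu>0 \<in> M" "x \<in> W \<mu>0" by auto
  define y' where "y' \<mu> = (if \<mu> = \<mu>0 then sc c x + (if \<mu>0 \<in> F then y \<mu>0 else 0) else y \<mu>)" for \<mu>
  have "(\<Sum>\<mu>\<in>insert \<mu>0 F. y' \<mu>) = sc c x + z"
  proof (cases "\<mu>0 \<in> F")
    case True
    then have "(\<Sum>\<mu>\<in>insert \<mu>0 F. y' \<mu>) = y' \<mu>0 + (\<Sum>\<mu>\<in>F - {\<mu>0}. y' \<mu>)"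
      using F(1) by (simp add: insert_absorb sum.remove)
    also have "(\<Sum>\<mu>\<in>F - {\<mu>0}. y' \<mu>) = (\<Sum>\<mu>\<in>F - {\<mu>0}. y \<mu>)" by (rule sum.cong) (auto simp: y'_def)
    finally show ?thesis using True F by (simp add: y'_def sum.remove add.assoc)
  next
    case False
    have "(\<Sum>\<mu>\<in>F. y' \<mu>) = (\<Sum>\<mu>\<in>F. y \<mu>)" by (rule sum.cong) (use False in \<open>auto simp: y'_def\<close>)
    then show ?thesis using False F by (simp add: y'_def)
  qed
  moreover have "\<forall>\<mu>\<in>insert \<mu>0 F. y' \<mu> \<in> W \<mu>"
    using F(3) m0
    by (auto simp: y'_def intro: subspace_add[OF subspace_weight_space] subspace_scale[OF subspace_weight_space])
  ultimately show ?case using F m0 by (intro exI[of _ "insert \<mu>0 F"] exI[of _ y']) auto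
qed

lemma weight_component:
  assumes x: "x \<in> W \<mu>" and F: "finite F" and y: "\<And>\<nu>. \<nu> \<in> F \<Longrightarrow> y \<nu> \<in> W \<nu>"
    and xs: "x = (\<Sum>\<nu>\<in>F. y \<nu>)"
  shows "x = (if \<mu> \<in> F then y \<mu> else 0)"
proof -
  define z where "z \<nu> = (if \<nu> = \<mu> then (if \<mu> \<in> F then y \<mu> else 0) - x else y \<nu>)" for \<nu>
  have "(\<Sum>\<nu>\<in>insert \<mu> F. z \<nu>) = 0"
  proof (cases "\<mu> \<in> F")
    case True
    then have "(\<Sum>\<nu>\<in>insert \<mu> F. z \<nu>) = z \<mu> + (\<Sum>\<nu>\<in>F - {\<mu>}. z \<nu>)"
      using F by (simp add: insert_absorb sum.remove)
    also have "(\<Sum>\<nu>\<in>F - {\<mu>}. z \<nu>) = (\<Sum>\<nu>\<in>F - {\<mu>}. y \<nu>)" by (rule sum.cong) (auto simp: z_def)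
    finally show ?thesis using True F xs by (simp add: z_def sum.remove)
  next
    case False
    have "(\<Sum>\<nu>\<in>F. z \<nu>) = (\<Sum>\<nu>\<in>F. y \<nu>)" by (rule sum.cong) (use False in \<open>auto simp: z_def\<close>)
    then show ?thesis using False F xs by (simp add: z_def)
  qed
  moreover have "\<And>\<nu>. \<nu> \<in> insert \<mu> F \<Longrightarrow> z \<nu> \<in> W \<nu>"
    using x y
    by (auto simp: z_def intro: subspace_diff[OF subspace_weight_space] subspace_neg[OF subspace_weight_space])
  ultimately have "\<forall>\<nu>\<in>insert \<mu> F. z \<nu> = 0"
    using weight_vectors_sum_eq_0[of "insert \<mu> F" z "\<lambda>\<nu>. \<nu>"] F by auto
  then show ?thesis by (auto simp: z_def)
qed

lemma span_weight_spaces: "span (\<Union>\<mu>\<in>UNIV. W \<mu>) = UNIV"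
proof -
  have "{w. \<forall>j\<in>UNIV. \<exists>c. D j 0 w = sc c w} \<subseteq> (\<Union>\<mu>\<in>UNIV. W \<mu>)"
  proof
    fix w assume "w \<in> {w. \<forall>j\<in>UNIV. \<exists>c. D j 0 w = sc c w}"
    then have "\<forall>j. D j 0 w = sc (SOME c. D j 0 w = sc c w) w" by (auto intro: someI)
    then have "w \<in> W (\<chi> j. SOME c. D j 0 w = sc c w)" by (simp add: weight_space_iff)
    then show "w \<in> (\<Union>\<mu>\<in>UNIV. W \<mu>)" by blast
  qed
  then have "span {w. \<forall>j\<in>UNIV. \<exists>c. D j 0 w = sc c w} \<subseteq> span (\<Union>\<mu>\<in>UNIV. W \<mu>)"
    by (rule span_mono)
  then show ?thesis
    using joint_eigenvectors_span[of UNIV "\<lambda>j. D j 0", OF _ linear_D D0_diagonalizable D0_commute] by auto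
qed

lemma weight_decomposition: "\<exists>F y. finite F \<and> (\<forall>\<mu>\<in>F. y \<mu> \<in> W \<mu>) \<and> x = (\<Sum>\<mu>\<in>F. y \<mu>)"
proof -
  have "x \<in> span (\<Union>\<mu>\<in>UNIV. W \<mu>)" using span_weight_spaces by simp
  from span_weight_spaces_sum[OF this] obtain F y where "finite F" "\<forall>\<mu>\<in>F. y \<mu> \<in> W \<mu>" "x = (\<Sum>\<mu>\<in>F. y \<mu>)"
    by blast
  then show ?thesis by blast
qed

lemma span_weight_spaces_invariant:
  assumes "lin f" "\<And>\<mu> w. \<mu> \<in> M \<Longrightarrow> w \<in> W \<mu> \<Longrightarrow> f w \<in> W (\<mu> + d)" "\<And>\<mu>. \<mu> \<in> M \<Longrightarrow> \<mu> + d \<in> M"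
  shows "f ` span (\<Union>\<mu>\<in>M. W \<mu>) \<subseteq> span (\<Union>\<mu>\<in>M. W \<mu>)"
proof
  fix x assume "x \<in> f ` span (\<Union>\<mu>\<in>M. W \<mu>)"
  then obtain z where z: "z \<in> span (\<Union>\<mu>\<in>M. W \<mu>)" "x = f z" by auto
  have "f z \<in> span (\<Union>\<mu>\<in>M. W \<mu>)"
  proof (rule lin_image_span[OF assms(1) _ z(1)])
    fix w assume "w \<in> (\<Union>\<mu>\<in>M. W \<mu>)"
    then obtain \<mu> where "\<mu> \<in> M" "w \<in> W \<mu>" by blast
    then have "f w \<in> W (\<mu> + d)" "\<mu> + d \<in> M" using assms(2,3) by auto
    then show "f w \<in> span (\<Union>\<mu>\<in>M. W \<mu>)" by (intro span_base) blast
  qed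
  then show "x \<in> span (\<Union>\<mu>\<in>M. W \<mu>)" using z by simp
qed

lemma weight_span_submodule:
  assumes "\<And>\<mu> m. \<mu> + of_int_vec m \<in> M \<longleftrightarrow> \<mu> \<in> M"
  shows "submod sc E D (span (\<Union>\<mu>\<in>M. W \<mu>))"
  unfolding submod_def
proof (intro conjI allI)
  show "subspace (span (\<Union>\<mu>\<in>M. W \<mu>))" by simp
  show "E m ` span (\<Union>\<mu>\<in>M. W \<mu>) \<subseteq> span (\<Union>\<mu>\<in>M. W \<mu>)" for m
    by (rule span_weight_spaces_invariant[OF linear_E]) (use assms E_weight_space in auto)
  show "D j s ` span (\<Union>\<mu>\<in>M. W \<mu>) \<subseteq> span (\<Union>\<mu>\<in>M. W \<mu>)" for j s
    by (rule span_weight_spaces_invariant[OF linear_D]) (use assms D_weight_space in auto)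
qed

lemma weight_spans_disjoint: "span (\<Union>\<mu>\<in>M. W \<mu>) \<inter> span (\<Union>\<mu>\<in>-M. W \<mu>) = {0}"
proof safe
  fix z assume zS: "z \<in> span (\<Union>\<mu>\<in>M. W \<mu>)" and zT: "z \<in> span (\<Union>\<mu>\<in>-M. W \<mu>)"
  obtain F1 y1 where F1: "finite F1" "F1 \<subseteq> M" "\<forall>\<mu>\<in>F1. y1 \<mu> \<in> W \<mu>" "z = (\<Sum>\<mu>\<in>F1. y1 \<mu>)"
    using span_weight_spaces_sum[OF zS] by blast
  obtain F2 y2 where F2: "finite F2" "F2 \<subseteq> -M" "\<forall>\<mu>\<in>F2. y2 \<mu> \<in> W \<mu>" "z = (\<Sum>\<mu>\<in>F2. y2 \<mu>)"
    using span_weight_spaces_sum[OF zT] by blast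
  define y where "y \<mu> = (if \<mu> \<in> F1 then y1 \<mu> else - y2 \<mu>)" for \<mu>
  have disj: "F1 \<inter> F2 = {}" using F1(2) F2(2) by auto
  have "(\<Sum>\<mu>\<in>F1 \<union> F2. y \<mu>) = (\<Sum>\<mu>\<in>F1. y \<mu>) + (\<Sum>\<mu>\<in>F2. y \<mu>)"
    by (rule sum.union_disjoint) (use F1 F2 disj in auto)
  also have "(\<Sum>\<mu>\<in>F1. y \<mu>) = z" unfolding F1(4) by (rule sum.cong) (auto simp: y_def)
  also have "(\<Sum>\<mu>\<in>F2. y \<mu>) = - z" unfolding F2(4) using disj
    by (auto simp: y_def sum_negf[symmetric] intro!: sum.cong)
  finally have "(\<Sum>\<mu>\<in>F1 \<union> F2. y \<mu>) = 0" by simp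
  moreover have "\<And>\<mu>. \<mu> \<in> F1 \<union> F2 \<Longrightarrow> y \<mu> \<in> W \<mu>"
    using F1(3) F2(3) by (auto simp: y_def intro: subspace_neg[OF subspace_weight_space])
  ultimately have "\<forall>\<mu>\<in>F1 \<union> F2. y \<mu> = 0"
    using weight_vectors_sum_eq_0[of "F1 \<union> F2" y "\<lambda>\<mu>. \<mu>"] F1(1) F2(1) by auto
  then have "\<forall>\<mu>\<in>F1. y1 \<mu> = 0" unfolding y_def by (metis UnCI)
  then show "z = 0" using F1(4) by simp
qed (auto intro: span_zero)

lemma weight_spans_complementary:
  "{x + y | x y. x \<in> span (\<Union>\<mu>\<in>M. W \<mu>) \<and> y \<in> span (\<Union>\<mu>\<in>-M. W \<mu>)} = UNIV"
proof safe
  fix z :: 'v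
  obtain F y where F: "finite F" "\<forall>\<mu>\<in>F. y \<mu> \<in> W \<mu>" "z = (\<Sum>\<mu>\<in>F. y \<mu>)"
    using weight_decomposition by blast
  have "z = (\<Sum>\<mu>\<in>F \<inter> M. y \<mu>) + (\<Sum>\<mu>\<in>F - M. y \<mu>)"
    using F by (simp add: sum.Int_Diff)
  moreover have "(\<Sum>\<mu>\<in>F \<inter> M. y \<mu>) \<in> span (\<Union>\<mu>\<in>M. W \<mu>)"
    using F(2) by (intro span_sum span_base) auto
  moreover have "(\<Sum>\<mu>\<in>F - M. y \<mu>) \<in> span (\<Union>\<mu>\<in>-M. W \<mu>)"
    using F(2) by (intro span_sum span_base) auto
  ultimately show "\<exists>x y. z = x + y \<and> x \<in> span (\<Union>\<mu>\<in>M. W \<mu>) \<and> y \<in> span (\<Union>\<mu>\<in>-M. W \<mu>)"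
    by blast
qed simp

lemma weights_in_single_coset:
  assumes "indecomposable sc E D"
  shows "\<exists>lam. W lam \<noteq> {0} \<and> (\<forall>\<mu>. W \<mu> \<noteq> {0} \<longrightarrow> (\<exists>m. \<mu> = lam + of_int_vec m))"
proof -
  have "(UNIV :: 'v set) \<noteq> {0}" using assms unfolding indecomposable_def by blast
  then obtain x :: 'v where "x \<noteq> 0" by blast
  obtain F y where F: "finite F" "\<forall>\<mu>\<in>F. y \<mu> \<in> W \<mu>" "x = (\<Sum>\<mu>\<in>F. y \<mu>)"
    using weight_decomposition by blast
  have "\<not> (\<forall>\<mu>\<in>F. y \<mu> = 0)"
    using \<open>x \<noteq> 0\<close> sum.neutral[of F y] unfolding F(3) by blast
  then obtain lam where lam: "lam \<in> F" "y lam \<noteq> 0" by blast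
  with F(2) have W_lam: "W lam \<noteq> {0}" by auto
  define C where "C = {\<mu>. \<exists>m. \<mu> = lam + of_int_vec m}"
  have C_shift: "\<mu> + of_int_vec m \<in> C \<longleftrightarrow> \<mu> \<in> C" for \<mu> m
  proof
    assume "\<mu> + of_int_vec m \<in> C"
    then obtain k where "\<mu> + of_int_vec m = lam + of_int_vec k" by (auto simp: C_def)
    then have "\<mu> = lam + of_int_vec (k - m)" by (simp add: of_int_vec_def vec_eq_iff algebra_simps)
    then show "\<mu> \<in> C" by (auto simp: C_def)
  next
    assume "\<mu> \<in> C"
    then obtain k where "\<mu> = lam + of_int_vec k" by (auto simp: C_def)
    then have "\<mu> + of_int_vec m = lam + of_int_vec (k + m)" by (simp add: of_int_vec_add algebra_simps)
    then show "\<mu> + of_int_vec m \<in> C" by (auto simp: C_def)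
  qed
  have not_split: "\<not> (submod sc E D S \<and> submod sc E D T \<and> S \<noteq> {0} \<and> T \<noteq> {0} \<and>
      S \<inter> T = {0} \<and> {x + y | x y. x \<in> S \<and> y \<in> T} = UNIV)" for S T
    using assms unfolding indecomposable_def by blast
  have submods: "submod sc E D (span (\<Union>\<mu>\<in>C. W \<mu>))" "submod sc E D (span (\<Union>\<mu>\<in>-C. W \<mu>))"
    by (intro weight_span_submodule; use C_shift in auto)+
  obtain w where w: "w \<in> W lam" "w \<noteq> 0" using W_lam zero_in_weight_space by blast
  have "lam \<in> C" unfolding C_def by (rule CollectI, rule exI[of _ 0]) simp
  with w have "span (\<Union>\<mu>\<in>C. W \<mu>) \<noteq> {0}" by (auto intro: span_base)
  with not_split[of "span (\<Union>\<mu>\<in>C. W \<mu>)" "span (\<Union>\<mu>\<in>-C. W \<mu>)"] submods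
  have C_compl: "span (\<Union>\<mu>\<in>-C. W \<mu>) = {0}"
    using weight_spans_disjoint[of C] weight_spans_complementary[of C] by blast
  have "W \<mu> = {0}" if "\<mu> \<notin> C" for \<mu>
    using that C_compl span_base[of _ "\<Union>\<mu>\<in>-C. W \<mu>"] zero_in_weight_space by blast
  then show ?thesis
    using W_lam unfolding C_def by blast
qed

lemma weight_unique: "x \<in> W \<mu> \<Longrightarrow> x \<in> W \<nu> \<Longrightarrow> x \<noteq> 0 \<Longrightarrow> \<mu> = \<nu>"
  unfolding weight_space_iff by (auto simp: vec_eq_iff)

definition weight_proj :: "complex^'n \<Rightarrow> 'v \<Rightarrow> 'v" where
  "weight_proj \<mu> x = (SOME w. w \<in> W \<mu> \<and> x - w \<in> span (\<Union>\<nu>\<in>-{\<mu>}. W \<nu>))"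

lemma weight_proj_exists: "\<exists>w. w \<in> W \<mu> \<and> x - w \<in> span (\<Union>\<nu>\<in>-{\<mu>}. W \<nu>)"
proof -
  obtain F y where F: "finite F" "\<forall>\<nu>\<in>F. y \<nu> \<in> W \<nu>" "x = (\<Sum>\<nu>\<in>F. y \<nu>)" using weight_decomposition by blast
  define w where "w = (if \<mu> \<in> F then y \<mu> else 0)"
  have "x - w = (\<Sum>\<nu>\<in>F - {\<mu>}. y \<nu>)"
    using F by (simp add: w_def sum_diff1)
  also have "\<dots> \<in> span (\<Union>\<nu>\<in>-{\<mu>}. W \<nu>)"
    using F(2) by (intro span_sum span_base) auto
  finally show ?thesis using F(2) by (intro exI[of _ w]) (auto simp: w_def)
qed

lemma weight_proj_eqI:
  assumes "w \<in> W \<mu>" "x - w \<in> span (\<Union>\<nu>\<in>-{\<mu>}. W \<nu>)"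
  shows "weight_proj \<mu> x = w"
proof -
  define w' where "w' = weight_proj \<mu> x"
  have w': "w' \<in> W \<mu>" "x - w' \<in> span (\<Union>\<nu>\<in>-{\<mu>}. W \<nu>)"
    unfolding w'_def weight_proj_def using someI_ex[OF weight_proj_exists[of \<mu> x]] by auto
  have d1: "w' - w \<in> W \<mu>" using w' assms by (intro subspace_diff[OF subspace_weight_space])
  have "w' - w = (x - w) - (x - w')" by simp
  also have "\<dots> \<in> span (\<Union>\<nu>\<in>-{\<mu>}. W \<nu>)" by (rule span_diff[OF assms(2) w'(2)])
  finally have "w' - w \<in> span (\<Union>\<nu>\<in>-{\<mu>}. W \<nu>)" .
  from span_weight_spaces_sum[OF this] obtain F y
    where F: "finite F" "F \<subseteq> -{\<mu>}" "\<forall>\<nu>\<in>F. y \<nu> \<in> W \<nu>" "w' - w = (\<Sum>\<nu>\<in>F. y \<nu>)"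
    by blast
  have "w' - w = (if \<mu> \<in> F then y \<mu> else 0)"
    by (rule weight_component[OF d1 F(1) _ F(4)]) (use F(3) in auto)
  moreover have "\<mu> \<notin> F" using F(2) by blast
  ultimately have "w' = w" by simp
  then show ?thesis by (simp add: w'_def)
qed

lemma linear_weight_proj: "lin (weight_proj \<mu>)"
proof (rule linI)
  have proj: "weight_proj \<mu> x \<in> W \<mu>" "x - weight_proj \<mu> x \<in> span (\<Union>\<nu>\<in>-{\<mu>}. W \<nu>)" for x
    unfolding weight_proj_def using someI_ex[OF weight_proj_exists[of \<mu> x]] by auto
  show "weight_proj \<mu> (x + y) = weight_proj \<mu> x + weight_proj \<mu> y" for x y
  proof (rule weight_proj_eqI)
    show "weight_proj \<mu> x + weight_proj \<mu> y \<in> W \<mu>"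
      using proj by (intro subspace_add[OF subspace_weight_space])
    have e: "x + y - (weight_proj \<mu> x + weight_proj \<mu> y) = (x - weight_proj \<mu> x) + (y - weight_proj \<mu> y)"
      by simp
    show "x + y - (weight_proj \<mu> x + weight_proj \<mu> y) \<in> span (\<Union>\<nu>\<in>-{\<mu>}. W \<nu>)"
      unfolding e by (rule span_add) (use proj in auto)
  qed
  show "weight_proj \<mu> (sc c x) = sc c (weight_proj \<mu> x)" for c x
  proof (rule weight_proj_eqI)
    show "sc c (weight_proj \<mu> x) \<in> W \<mu>"
      using proj by (intro subspace_scale[OF subspace_weight_space])
    have e: "sc c x - sc c (weight_proj \<mu> x) = sc c (x - weight_proj \<mu> x)"
      by (simp add: scale_right_diff_distrib)
    show "sc c x - sc c (weight_proj \<mu> x) \<in> span (\<Union>\<nu>\<in>-{\<mu>}. W \<nu>)"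
      unfolding e by (rule span_scale) (use proj in auto)
  qed
qed

lemma weight_proj_same: "w \<in> W \<mu> \<Longrightarrow> weight_proj \<mu> w = w"
  by (rule weight_proj_eqI) (auto simp: span_zero)

lemma weight_proj_other: "w \<in> W \<nu> \<Longrightarrow> \<nu> \<noteq> \<mu> \<Longrightarrow> weight_proj \<mu> w = 0"
  by (rule weight_proj_eqI) (auto intro: span_base)

lemma weight_proj_weight_space: "w \<in> W \<nu> \<Longrightarrow> weight_proj \<mu> w = (if \<nu> = \<mu> then w else 0)"
  by (cases "\<nu> = \<mu>") (simp_all add: weight_proj_same weight_proj_other)

end

locale J_module_coset = J_module sc E D for sc :: "complex \<Rightarrow> 'v::ab_group_add \<Rightarrow> 'v"
  and E :: "int^'n \<Rightarrow> 'v \<Rightarrow> 'v" and D :: "'n \<Rightarrow> int^'n \<Rightarrow> 'v \<Rightarrow> 'v" +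
  fixes lam :: "complex^'n"
  assumes nonzero_weight_in_coset: "\<And>\<mu>. W \<mu> \<noteq> {0} \<Longrightarrow> \<exists>m. \<mu> = lam + of_int_vec m"
begin

abbreviation U where "U \<equiv> W lam"

lemma subspace_U: "subspace U" by (rule subspace_weight_space)

lemma coset_decomposition: "\<exists>F z. finite F \<and> (\<forall>m\<in>F. z m \<in> W (lam + of_int_vec m)) \<and> x = (\<Sum>m\<in>F. z m)"
proof -
  obtain F y where F: "finite F" "\<forall>\<nu>\<in>F. y \<nu> \<in> W \<nu>" "x = (\<Sum>\<nu>\<in>F. y \<nu>)" using weight_decomposition by blast
  define F' where "F' = {\<nu>\<in>F. y \<nu> \<noteq> 0}"
  have x': "x = (\<Sum>\<nu>\<in>F'. y \<nu>)"
    unfolding F(3) F'_def by (rule sum.mono_neutral_right) (use F(1) in auto)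
  define h where "h m = lam + of_int_vec m" for m
  have injh: "inj h" by (auto simp: inj_def h_def of_int_vec_eq_iff)
  define G where "G = h -` F'"
  have finG: "finite G" unfolding G_def using F(1) injh by (intro finite_vimageI) (auto simp: F'_def)
  have hG: "h ` G = F'"
  proof -
    have "\<nu> \<in> range h" if "\<nu> \<in> F'" for \<nu>
    proof -
      have "y \<nu> \<in> W \<nu>" "y \<nu> \<noteq> 0" using that F(2) by (auto simp: F'_def)
      then have "W \<nu> \<noteq> {0}" by (metis singletonD)
      then obtain m where "\<nu> = lam + of_int_vec m" using nonzero_weight_in_coset by blast
      then show ?thesis by (auto simp: h_def)
    qed
    then show ?thesis by (auto simp: G_def)
  qed
  have inj2: "inj_on h G" using injh by (simp add: inj_on_def inj_def)
  have "x = (\<Sum>\<nu>\<in>h ` G. y \<nu>)" using x' hG by simp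
  also have "\<dots> = (\<Sum>m\<in>G. y (h m))" using sum.reindex[OF inj2, of y] by simp
  finally have xs: "x = (\<Sum>m\<in>G. y (h m))" .
  have ws: "\<forall>m\<in>G. y (h m) \<in> W (lam + of_int_vec m)"
  proof
    fix m assume "m \<in> G"
    then have "h m \<in> F" by (simp add: G_def F'_def)
    then have "y (h m) \<in> W (h m)" using F(2) by blast
    then show "y (h m) \<in> W (lam + of_int_vec m)" by (simp add: h_def)
  qed
  show ?thesis by (rule exI[of _ G], rule exI[of _ "\<lambda>m. y (h m)"]) (use finG xs ws in blast)
qed

lemma E_neg_to_U: "w \<in> W (lam + of_int_vec m) \<Longrightarrow> E (- m) w \<in> U"
  using E_weight_space[of w "lam + of_int_vec m" "- m"] by (simp add: of_int_vec_minus)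

lemma E_from_U: "u \<in> U \<Longrightarrow> E m u \<in> W (lam + of_int_vec m)"
  using E_weight_space by simp

lemma weight_proj_E_coset:
  assumes "w \<in> W (lam + of_int_vec m)"
  shows "weight_proj (lam + of_int_vec k) (E m' w) = (if m + m' = k then E m' w else 0)"
  using weight_proj_weight_space[OF E_weight_space[OF assms, of m']]
  by (simp add: add.assoc of_int_vec_add[symmetric] of_int_vec_eq_iff)

lemma U_subset_span_finite: "\<exists>G. finite G \<and> G \<subseteq> U \<and> U \<subseteq> span G"
proof -
  obtain V where "finite V" "F_basis sc E V" using exists_F_basis by blast
  then have V: "finite V" "span ((\<lambda>(m, v). E m v) ` (UNIV \<times> V)) = UNIV"
    by (simp_all add: F_basis_def)
  have "\<forall>v. \<exists>F z. finite F \<and> (\<forall>m\<in>F. z m \<in> W (lam + of_int_vec m)) \<and> (\<Sum>m\<in>F. z m) = v"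
    using coset_decomposition by (metis (no_types))
  then have "\<exists>F. \<forall>v. \<exists>z. finite (F v) \<and> (\<forall>m\<in>F v. z m \<in> W (lam + of_int_vec m)) \<and> (\<Sum>m\<in>F v. z m) = v"
    by (rule choice)
  then obtain F where "\<forall>v. \<exists>z. finite (F v) \<and> (\<forall>m\<in>F v. z m \<in> W (lam + of_int_vec m)) \<and> (\<Sum>m\<in>F v. z m) = v" ..
  then have "\<exists>z. \<forall>v. finite (F v) \<and> (\<forall>m\<in>F v. z v m \<in> W (lam + of_int_vec m)) \<and> (\<Sum>m\<in>F v. z v m) = v"
    by (rule choice)
  then obtain z where Fz: "\<forall>v. finite (F v) \<and> (\<forall>m\<in>F v. z v m \<in> W (lam + of_int_vec m)) \<and> (\<Sum>m\<in>F v. z v m) = v" ..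
  then have F: "finite (F v)" and z: "m \<in> F v \<Longrightarrow> z v m \<in> W (lam + of_int_vec m)"
    and v_sum: "(\<Sum>m\<in>F v. z v m) = v" for v m
    by blast+
  define G where "G = (\<lambda>(v, m). E (- m) (z v m)) ` (SIGMA v:V. F v)"
  have proj_E: "weight_proj lam (E k v) \<in> span G" if "v \<in> V" for k v
  proof -
    have "weight_proj lam (E k v) = weight_proj lam (E k (\<Sum>m\<in>F v. z v m))"
      by (simp only: v_sum)
    also have "\<dots> = (\<Sum>m\<in>F v. weight_proj (lam + of_int_vec 0) (E k (z v m)))"
      by (simp add: endo.linear_sum[OF linear_E] endo.linear_sum[OF linear_weight_proj])
    also have "\<dots> = (\<Sum>m\<in>F v. if m + k = 0 then E k (z v m) else 0)"
      by (intro sum.cong refl weight_proj_E_coset z)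
    also have "\<dots> \<in> span G"
    proof (intro span_sum)
      fix m assume "m \<in> F v"
      then have "m + k = 0 \<Longrightarrow> E k (z v m) \<in> G"
        unfolding G_def using \<open>v \<in> V\<close> by (intro image_eqI[of _ _ "(v, m)"]) (auto simp: add_eq_0_iff)
      then show "(if m + k = 0 then E k (z v m) else 0) \<in> span G"
        by (auto intro: span_base span_zero)
    qed
    finally show ?thesis .
  qed
  have "u \<in> span G" if "u \<in> U" for u
  proof -
    have "u \<in> span ((\<lambda>(m, v). E m v) ` (UNIV \<times> V))" using V(2) by simp
    then have "weight_proj lam u \<in> span G"
      by (rule lin_image_span[OF linear_weight_proj, rotated]) (use proj_E in auto)
    then show ?thesis using weight_proj_same[OF that] by simp
  qed
  then have "U \<subseteq> span G" by blast
  moreover have "finite G" "G \<subseteq> U"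
    unfolding G_def using V(1) F z by (auto intro: E_neg_to_U)
  ultimately show ?thesis by blast
qed

lemma finite_basis_U: "\<exists>B. finite B \<and> B \<subseteq> U \<and> independent B \<and> span B = U"
proof -
  obtain G where G: "finite G" "U \<subseteq> span G"
    using U_subset_span_finite by blast
  obtain B where B: "B \<subseteq> U" "independent B" "U \<subseteq> span B" "card B = dim U"
    using basis_exists by blast
  have "finite B" using independent_span_bound[OF G(1) B(2)] B(1) G(2) by auto
  moreover have "span B = U"
    using B span_minimal[OF B(1) subspace_U] by auto
  ultimately show ?thesis using B by blast
qed

end

context J_module_coset
begin

lemma E_0_right: "E m 0 = 0" by (rule endo.linear_0[OF linear_E])

lemma inj_on_E_basis:
  assumes "B \<subseteq> U" "independent B"
  shows "inj_on (\<lambda>(m, v). E m v) (UNIV \<times> B)"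
proof (rule inj_onI, clarify)
  fix m b m' b' assume b: "b \<in> B" "b' \<in> B" and eq: "E m b = E m' b'"
  have "E m b \<noteq> 0"
    using b(1) assms(2) dependent_zero E_eq_iff[of m b 0] E_0_right by auto
  moreover have "E m b \<in> W (lam + of_int_vec m)"
    using E_from_U b(1) assms(1) by auto
  moreover have "E m b \<in> W (lam + of_int_vec m')"
    unfolding eq using E_from_U b(2) assms(1) by auto
  ultimately have "lam + of_int_vec m = lam + of_int_vec m'"
    using weight_unique by blast
  then have "m = m'" by (simp add: of_int_vec_eq_iff)
  then show "m = m' \<and> b = b'" using eq E_eq_iff by simp
qed

lemma span_E_basis:
  assumes "span B = U"
  shows "span ((\<lambda>(m, v). E m v) ` (UNIV \<times> B)) = UNIV"
proof -
  have z_in: "z \<in> span ((\<lambda>(m, v). E m v) ` (UNIV \<times> B))" if "z \<in> W (lam + of_int_vec m)" for z m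
  proof -
    have "E (- m) z \<in> span B" using E_neg_to_U that assms by auto
    then have "E m (E (- m) z) \<in> span ((\<lambda>(m, v). E m v) ` (UNIV \<times> B))"
      by (rule lin_image_span[OF linear_E, rotated]) (auto intro: span_base)
    then show ?thesis by (simp add: E_E_neg)
  qed
  have "x \<in> span ((\<lambda>(m, v). E m v) ` (UNIV \<times> B))" for x
  proof -
    obtain F z where F: "finite F" "\<forall>m\<in>F. z m \<in> W (lam + of_int_vec m)" "x = (\<Sum>m\<in>F. z m)"
      using coset_decomposition by blast
    show ?thesis
      unfolding F(3) using F(2) z_in by (intro span_sum) auto
  qed
  then show ?thesis by auto
qed

lemma independent_E_basis:
  assumes B: "B \<subseteq> U" "independent B"
  shows "independent ((\<lambda>(m, v). E m v) ` (UNIV \<times> B))"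
proof
  assume "dependent ((\<lambda>(m, v). E m v) ` (UNIV \<times> B))"
  then obtain t u v0 where t: "finite t" "t \<subseteq> (\<lambda>(m, v). E m v) ` (UNIV \<times> B)"
    "(\<Sum>v\<in>t. sc (u v) v) = 0" "v0 \<in> t" "u v0 \<noteq> 0"
    unfolding dependent_explicit by blast
  have in_image: "\<exists>m b. b \<in> B \<and> v = E m b" if "v \<in> t" for v
  proof -
    have "v \<in> (\<lambda>(m, v). E m v) ` (UNIV \<times> B)" using t(2) that by blast
    then show ?thesis by auto
  qed
  obtain m0 b0 where v0: "b0 \<in> B" "v0 = E m0 b0"
    using in_image[OF t(4)] by blast
  define g where "g v = E (- m0) (weight_proj (lam + of_int_vec m0) v)" for v
  have g_E: "g (E m b) = (if m = m0 then b else 0)" if "b \<in> B" for m b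
  proof -
    have "b \<in> W (lam + of_int_vec 0)" using that B(1) by auto
    from weight_proj_E_coset[OF this, of m0 m] show ?thesis
      by (simp add: g_def E_neg_E E_0_right)
  qed
  have inj: "inj (E m0)" using E_eq_iff by (auto intro: injI)
  define t0 where "t0 = B \<inter> E m0 -` t"
  have t0: "finite t0" "t0 \<subseteq> B" "b0 \<in> t0"
    using finite_vimageI[OF t(1) inj] t(4) v0 by (auto simp: t0_def)
  have g_other: "g v = 0" if v: "v \<in> t" "v \<notin> E m0 ` t0" for v
  proof -
    obtain m b where mb: "b \<in> B" "v = E m b" using in_image[OF v(1)] by blast
    with v have "m \<noteq> m0" by (auto simp: t0_def)
    with g_E mb show ?thesis by simp
  qed
  have "0 = g (\<Sum>v\<in>t. sc (u v) v)"
    using t(3) by (simp add: g_def E_0_right endo.linear_0[OF linear_weight_proj])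
  also have "\<dots> = (\<Sum>v\<in>t. sc (u v) (g v))"
    unfolding g_def by (simp add: endo.linear_sum[OF linear_E] endo.linear_sum[OF linear_weight_proj]
        endo.linear_scale[OF linear_E] endo.linear_scale[OF linear_weight_proj])
  also have "\<dots> = (\<Sum>v\<in>E m0 ` t0. sc (u v) (g v))"
    using t(1) g_other by (intro sum.mono_neutral_right) (auto simp: t0_def)
  also have "\<dots> = (\<Sum>b\<in>t0. sc (u (E m0 b)) (g (E m0 b)))"
    using inj by (simp add: sum.reindex inj_on_subset[OF inj])
  also have "\<dots> = (\<Sum>b\<in>t0. sc (u (E m0 b)) b)"
    using t0(2) g_E by (intro sum.cong) auto
  finally have "u (E m0 b0) = 0"
    using independentD[OF B(2) t0(1,2)] t0(3) by simp
  with t(5) v0 show False by simp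
qed

lemma F_basis_of_basis_U:
  assumes "B \<subseteq> U" "independent B" "span B = U"
  shows "F_basis sc E B"
  unfolding F_basis_def using inj_on_E_basis span_E_basis independent_E_basis assms by blast

lemma linear_Dop: "lin (Dop E D j s)"
  unfolding Dop_def by (intro lin_compose[OF linear_E linear_D])

lemma Dop_in_U: "u \<in> U \<Longrightarrow> Dop E D j s u \<in> U"
  unfolding Dop_def using D_weight_space[of u lam j s] E_neg_to_U by simp

lemma D_E_U: "v \<in> U \<Longrightarrow> D j s (E m v) = E (m + s) (sc (of_int (m $ j)) v + Dop E D j s v)"
  by (simp add: D_E Dop_def E_E endo.linear_add[OF linear_E] endo.linear_scale[OF linear_E])

lemma D_eq_E_Dop: "D j s u = E s (Dop E D j s u)"
  by (simp add: Dop_def E_E_neg)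

lemma Dop_0: "u \<in> U \<Longrightarrow> Dop E D j 0 u = sc (lam $ j) u"
  by (simp add: Dop_def weight_space_iff)

lemma Dop_commutator:
  assumes u: "u \<in> U"
  shows "Dop E D j s (Dop E D k m u) - Dop E D k m (Dop E D j s u) =
    sc (of_int (m $ j)) (Dop E D k (s + m) u - Dop E D k m u)
    - sc (of_int (s $ k)) (Dop E D j (s + m) u - Dop E D j s u)"
proof -
  let ?T = "Dop E D"
  have a: "D j s (D k m u) = E (m + s) (sc (of_int (m $ j)) (?T k m u) + ?T j s (?T k m u))"
    using D_E_U[OF Dop_in_U[OF u]] D_eq_E_Dop[of k m u] by simp
  have b: "D k m (D j s u) = E (s + m) (sc (of_int (s $ k)) (?T j s u) + ?T k m (?T j s u))"
    using D_E_U[OF Dop_in_U[OF u]] D_eq_E_Dop[of j s u] by simp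
  have c: "D j s (D k m u) - D k m (D j s u) =
     E (s + m) (sc (of_int (m $ j)) (?T k (s + m) u) - sc (of_int (s $ k)) (?T j (s + m) u))"
    using D_commutator[of j s k m u] D_eq_E_Dop[of k "s + m" u] D_eq_E_Dop[of j "s + m" u]
    by (simp add: endo.linear_diff[OF linear_E] endo.linear_add[OF linear_E] endo.linear_scale[OF linear_E])
  have "E (s + m) ((sc (of_int (m $ j)) (?T k m u) + ?T j s (?T k m u))
      - (sc (of_int (s $ k)) (?T j s u) + ?T k m (?T j s u)))
    = E (s + m) (sc (of_int (m $ j)) (?T k (s + m) u) - sc (of_int (s $ k)) (?T j (s + m) u))"
    using a b c by (simp add: endo.linear_diff[OF linear_E] add.commute)
  then have "(sc (of_int (m $ j)) (?T k m u) + ?T j s (?T k m u))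
      - (sc (of_int (s $ k)) (?T j s u) + ?T k m (?T j s u))
    = sc (of_int (m $ j)) (?T k (s + m) u) - sc (of_int (s $ k)) (?T j (s + m) u)"
    using E_eq_iff by blast
  then show ?thesis
    by (simp add: scale_right_diff_distrib algebra_simps)
qed

end

lemma axis_add: "axis i x + axis i y = axis i (x + y :: 'a::monoid_add)"
  by (simp add: axis_def vec_eq_iff)

lemma times_arg_x_minus_one_power:
  "smult (of_int a) ([:-1, 1:] ^ Suc N) + pCons 0 (pderiv ([:-1, 1:] ^ Suc N)) =
    [:-1, 1:] ^ N * (smult (of_int a) [:-1, 1:] + [:0, of_nat (Suc N):] :: 'a::idom poly)"
proof -
  have "smult c (p * [:-1, 1:]) + pCons 0 (smult d p) = p * (smult c [:-1, 1:] + [:0, d:])"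
    for c d :: 'a and p :: "'a poly"
    by (rule poly_eqI) (simp add: coeff_pCons algebra_simps mult_pCons_right split: nat.split)
  moreover have "pderiv ([:-1, 1:] ^ Suc N) = smult (of_nat (Suc N)) ([:-1, 1:] ^ N :: 'a poly)"
    by (simp only: pderiv_power_Suc) (simp add: pderiv_pCons)
  ultimately show ?thesis
    by (simp only: power_Suc2)
qed

lemma axis_nth_if: "axis i x $ k = (if k = i then x else 0)"
  by (simp add: axis_def)

context J_module_coset
begin

lemma witt_family_axis:
  assumes "finite B" "independent B" "span B = U"
  shows "witt_family sc U (\<lambda>x. Dop E D i (axis i x)) B"
proof (intro witt_family.intro vspace_axioms witt_family_axioms.intro)
  show "u \<in> U \<Longrightarrow> Dop E D i (axis i x) (Dop E D i (axis i y) u) - Dop E D i (axis i y) (Dop E D i (axis i x) u) =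
      sc (of_int (y - x)) (Dop E D i (axis i (x + y)) u) - sc (of_int y) (Dop E D i (axis i y) u)
      + sc (of_int x) (Dop E D i (axis i x) u)" for u x y
    using Dop_commutator[of u i "axis i x" i "axis i y"]
    by (simp add: axis_add scale_right_diff_distrib scale_left_diff_distrib algebra_simps)
qed (use assms subspace_U linear_Dop Dop_in_U in auto)

lemma axis_difference_vanishes:
  obtains N where "N \<ge> 1" "\<And>a u. u \<in> U \<Longrightarrow> shift_eval (\<lambda>x. Dop E D i (axis i x) u) a ([:-1, 1:] ^ N) = 0"
proof -
  obtain B where B: "finite B" "B \<subseteq> U" "independent B" "span B = U"
    using finite_basis_U by blast
  interpret witt: witt_family sc U "\<lambda>x. Dop E D i (axis i x)" B
    using witt_family_axis B by blast
  obtain N where N: "\<forall>a. \<forall>u\<in>U. witt.tau_poly a ([:-1, 1:] ^ N) u = 0"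
    using witt.finite_difference_vanishes by blast
  show thesis
  proof (rule that[of "Suc N"])
    show "shift_eval (\<lambda>x. Dop E D i (axis i x) u) a ([:-1, 1:] ^ Suc N) = 0" if "u \<in> U" for a u
      by (rule shift_eval_power_mono[of _ N]) (use N that in \<open>auto simp: witt.tau_poly_def\<close>)
  qed simp
qed

definition difference_vanishes :: "nat \<Rightarrow> 'n \<Rightarrow> 'n \<Rightarrow> bool" where
  "difference_vanishes N j i \<longleftrightarrow>
     (\<forall>s a u. u \<in> U \<longrightarrow> shift_eval (\<lambda>x. Dop E D j (s + axis i x) u) a ([:-1, 1:] ^ N) = 0)"

lemma difference_vanishes_mono:
  assumes "difference_vanishes N j i" "N \<le> M"
  shows "difference_vanishes M j i"
  unfolding difference_vanishes_def
proof (intro allI impI)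
  fix s a u assume "u \<in> U"
  then show "shift_eval (\<lambda>x. Dop E D j (s + axis i x) u) a ([:-1, 1:] ^ M) = 0"
    using assms by (intro shift_eval_power_mono[of _ N]) (auto simp: difference_vanishes_def)
qed

text \<open>Bracketing with \<open>D\<^sub>i(x e\<^sub>i)\<close> moves the vanishing along the axis \<open>i\<close> to \<open>D\<^sub>j\<close> at every
  base point \<open>q\<close> with \<open>q\<^sub>i \<noteq> 0\<close>; a shift of the base point along the axis removes that restriction.\<close>

lemma difference_vanishes_off_axis:
  assumes axis: "\<And>a u. u \<in> U \<Longrightarrow> shift_eval (\<lambda>x. Dop E D i (axis i x) u) a ([:-1, 1:] ^ N) = 0"
    and "N \<ge> 1" "j \<noteq> i"
  shows "difference_vanishes N j i"
proof -
  have base: "shift_eval (\<lambda>x. Dop E D j (q + axis i x) u) a ([:-1, 1:] ^ N) = 0"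
    if q: "q $ i \<noteq> 0" and u: "u \<in> U" for q a u
  proof -
    have commutator: "Dop E D i (axis i x) (Dop E D j q u) - Dop E D j q (Dop E D i (axis i x) u) =
       sc (of_int (q $ i)) (Dop E D j (q + axis i x) u - Dop E D j q u)" for x
      using Dop_commutator[OF u, of i "axis i x" j q] \<open>j \<noteq> i\<close> by (simp add: axis_nth_if add.commute)
    have "shift_eval (\<lambda>x. Dop E D i (axis i x) (Dop E D j q u) - Dop E D j q (Dop E D i (axis i x) u)) a
        ([:-1, 1:] ^ N) = 0"
      using axis Dop_in_U[OF u] u endo.linear_0[OF linear_Dop]
      by (simp add: shift_eval_diff_fun shift_eval_linear[OF linear_Dop])
    then have "sc (of_int (q $ i)) (shift_eval (\<lambda>x. Dop E D j (q + axis i x) u) a ([:-1, 1:] ^ N)) = 0"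
      using \<open>N \<ge> 1\<close>
      by (simp add: commutator shift_eval_scale_fun shift_eval_diff_fun shift_eval_const_fun power_0_left)
    then show ?thesis using q by simp
  qed
  show ?thesis unfolding difference_vanishes_def
  proof (intro allI impI)
    fix s a u assume u: "u \<in> U"
    show "shift_eval (\<lambda>x. Dop E D j (s + axis i x) u) a ([:-1, 1:] ^ N) = 0"
    proof (cases "s $ i = 0")
      case True
      have "shift_eval (\<lambda>x. Dop E D j (s + axis i x) u) a ([:-1, 1:] ^ N) =
          shift_eval (\<lambda>x. Dop E D j ((s + axis i 1) + axis i x) u) (a - 1) ([:-1, 1:] ^ N)"
        unfolding shift_eval_def by (rule sum.cong) (simp_all add: add.assoc axis_add)
      also have "\<dots> = 0" by (rule base) (use True u in auto)
      finally show ?thesis .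
    qed (use base u in blast)
  qed
qed

text \<open>On the axis itself, bracket with \<open>D\<^sub>i(e\<^sub>k)\<close> for some \<open>k \<noteq> i\<close>: it expresses the \<open>i\<close>-direction
  differences of \<open>D\<^sub>i\<close> through those of \<open>D\<^sub>k\<close>, at the cost of one more difference.\<close>

lemma difference_vanishes_on_axis:
  assumes Dk: "difference_vanishes N k i" and "k \<noteq> i"
  shows "difference_vanishes (Suc N) i i"
  unfolding difference_vanishes_def
proof (intro allI impI)
  fix s a u assume u: "u \<in> U"
  define q where "q = axis k (1::int)"
  define r where "r = s - q"
  define G where "G x = Dop E D k (s + axis i x) u - Dop E D k (r + axis i x) u" for x
  have commutator: "Dop E D k (r + axis i x) (Dop E D i q u) - Dop E D i q (Dop E D k (r + axis i x) u) =
     (Dop E D i (s + axis i x) u - Dop E D i q u) - sc (of_int (r $ i)) (G x) - sc (of_int x) (G x)" for x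
  proof -
    have "Dop E D k (r + axis i x) (Dop E D i q u) - Dop E D i q (Dop E D k (r + axis i x) u) =
      sc (of_int (q $ k)) (Dop E D i (r + axis i x + q) u - Dop E D i q u) -
      sc (of_int ((r + axis i x) $ i)) (Dop E D k (r + axis i x + q) u - Dop E D k (r + axis i x) u)"
      by (rule Dop_commutator[OF u])
    also have "q $ k = 1" by (simp add: q_def)
    also have "(r + axis i x) $ i = r $ i + x" by simp
    also have "r + axis i x + q = s + axis i x" by (simp add: r_def algebra_simps)
    finally show ?thesis by (simp add: G_def scale_left_distrib diff_diff_eq)
  qed
  have G0: "shift_eval G b ([:-1, 1:] ^ N) = 0" for b
    using Dk u unfolding G_def difference_vanishes_def by (simp add: shift_eval_diff_fun)
  have "shift_eval (\<lambda>x. Dop E D k (r + axis i x) (Dop E D i q u) - Dop E D i q (Dop E D k (r + axis i x) u)) a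
      ([:-1, 1:] ^ Suc N) = 0"
    using difference_vanishes_mono[OF Dk, of "Suc N"] Dop_in_U[OF u] u endo.linear_0[OF linear_Dop]
    unfolding difference_vanishes_def by (simp add: shift_eval_diff_fun shift_eval_linear[OF linear_Dop])
  moreover have "shift_eval G a ([:-1, 1:] ^ Suc N) = 0"
    by (rule shift_eval_power_mono[of _ N]) (use G0 in auto)
  moreover have "shift_eval (\<lambda>x. sc (of_int x) (G x)) a ([:-1, 1:] ^ Suc N) = 0"
    unfolding shift_eval_times_arg times_arg_x_minus_one_power shift_eval_mult G0
    by (rule shift_eval_zero_fun)
  ultimately show "shift_eval (\<lambda>x. Dop E D i (s + axis i x) u) a ([:-1, 1:] ^ Suc N) = 0"
    by (simp add: commutator shift_eval_diff_fun shift_eval_scale_fun shift_eval_const_fun)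
qed

lemma difference_vanishes_one_dim:
  assumes axis: "\<And>a u. u \<in> U \<Longrightarrow> shift_eval (\<lambda>x. Dop E D i (axis i x) u) a ([:-1, 1:] ^ N) = 0"
    and "\<forall>k. k = i"
  shows "difference_vanishes N i i"
  unfolding difference_vanishes_def
proof (intro allI impI)
  fix s a u assume u: "u \<in> U"
  have "s + axis i x = axis i (s $ i + x)" for x :: int
    using \<open>\<forall>k. k = i\<close> by (auto simp: axis_def vec_eq_iff)
  then have "shift_eval (\<lambda>x. Dop E D i (s + axis i x) u) a ([:-1, 1:] ^ N) =
      shift_eval (\<lambda>x. Dop E D i (axis i x) u) (s $ i + a) ([:-1, 1:] ^ N)"
    by (simp add: shift_eval_def add.assoc)
  then show "shift_eval (\<lambda>x. Dop E D i (s + axis i x) u) a ([:-1, 1:] ^ N) = 0"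
    using axis u by simp
qed

lemma uniform_difference_vanishes:
  obtains N where "\<And>i j. difference_vanishes N j i"
proof -
  have "\<exists>N. \<forall>j. difference_vanishes N j i" for i
  proof -
    obtain N where N: "N \<ge> 1"
      "\<And>a u. u \<in> U \<Longrightarrow> shift_eval (\<lambda>x. Dop E D i (axis i x) u) a ([:-1, 1:] ^ N) = 0"
      using axis_difference_vanishes by blast
    have off: "difference_vanishes N j i" if "j \<noteq> i" for j
      using difference_vanishes_off_axis[OF N(2) N(1) that] .
    have "difference_vanishes (Suc N) i i"
    proof (cases "\<exists>k. k \<noteq> i")
      case True
      then show ?thesis using difference_vanishes_on_axis[OF off] by blast
    next
      case False
      then show ?thesis
        using difference_vanishes_mono[OF difference_vanishes_one_dim[OF N(2)]] by auto
    qed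
    then show ?thesis
      using off difference_vanishes_mono by (metis le_SucI order_refl)
  qed
  then obtain Ni where Ni: "\<And>i j. difference_vanishes (Ni i) j i" by metis
  have "Ni i \<le> (\<Sum>i\<in>UNIV. Ni i)" for i by (rule member_le_sum) auto
  then show thesis
    using Ni difference_vanishes_mono by (intro that) blast
qed

end

lemma monomial_add: "monomial s (\<alpha> + \<beta>) = monomial s \<alpha> * monomial s \<beta>"
  unfolding monomial_def by (simp add: power_add prod.distrib)

lemma monomial_0: "monomial s 0 = 1"
  by (simp add: monomial_def)

lemma monomial_axis: "monomial s (axis i 1) = of_int (s $ i)"
proof -
  have "monomial s (axis i 1) = (\<Prod>j\<in>UNIV. if j = i then of_int (s $ j) else 1)"
    unfolding monomial_def axis_def by (intro prod.cong) auto
  also have "\<dots> = of_int (s $ i)" by (subst prod.delta) auto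
  finally show ?thesis .
qed

lemma gbinomial_eq_poly:
  "(x :: 'a::field_char_0) gchoose b = poly (smult (1 / fact b) (\<Prod>k<b. [:- of_nat k, 1:])) x"
proof -
  have "(x gchoose b) * fact b = (\<Prod>k<b. x - of_nat k)"
    using gbinomial_mult_fact'[of x b] by (simp add: atLeast0LessThan)
  then show ?thesis
    by (simp add: poly_prod field_simps)
qed

lemma poly_fun2_diag_plus_monomials:
  fixes A :: "(nat^'n) set" and r :: "nat^'n \<Rightarrow> complex"
  assumes "finite A"
  shows "poly_fun2 (\<lambda>s m. of_int (m $ j) * \<delta> + (\<Sum>\<alpha>\<in>A. monomial s \<alpha> * r \<alpha>))"
proof -
  define A' where "A' = (\<lambda>\<alpha>. (\<alpha>, 0 :: nat^'n)) ` A \<union> {(0, axis j 1)}"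
  define c where "c = (\<lambda>(\<alpha> :: nat^'n, \<beta> :: nat^'n). if \<beta> = axis j 1 then \<delta> else r \<alpha>)"
  have "of_int (m $ j) * \<delta> + (\<Sum>\<alpha>\<in>A. monomial s \<alpha> * r \<alpha>) =
      (\<Sum>(\<alpha>, \<beta>)\<in>A'. c (\<alpha>, \<beta>) * monomial s \<alpha> * monomial m \<beta>)" for s m :: "int^'n"
  proof -
    have disj: "(\<lambda>\<alpha>. (\<alpha>, 0 :: nat^'n)) ` A \<inter> {(0, axis j 1)} = {}" by auto
    have "(\<Sum>(\<alpha>, \<beta>)\<in>A'. c (\<alpha>, \<beta>) * monomial s \<alpha> * monomial m \<beta>) =
        (\<Sum>(\<alpha>, \<beta>)\<in>(\<lambda>\<alpha>. (\<alpha>, 0 :: nat^'n)) ` A. c (\<alpha>, \<beta>) * monomial s \<alpha> * monomial m \<beta>)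
        + c (0, axis j 1) * monomial s 0 * monomial m (axis j 1)"
      unfolding A'_def using assms disj by (subst sum.union_disjoint) auto
    also have "(\<Sum>(\<alpha>, \<beta>)\<in>(\<lambda>\<alpha>. (\<alpha>, 0 :: nat^'n)) ` A. c (\<alpha>, \<beta>) * monomial s \<alpha> * monomial m \<beta>)
        = (\<Sum>\<alpha>\<in>A. r \<alpha> * monomial s \<alpha>)"
      by (subst sum.reindex) (auto simp: inj_on_def c_def monomial_0 axis_eq_0_iff[symmetric])
    also have "c (0, axis j 1) * monomial s 0 * monomial m (axis j 1) = of_int (m $ j) * \<delta>"
      by (simp only: monomial_axis monomial_0) (simp add: c_def)
    finally show ?thesis
      by (simp add: ac_simps)
  qed
  moreover have "finite A'" using assms by (simp add: A'_def)
  ultimately show ?thesis unfolding poly_fun2_def by blast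
qed

definition vec_merge :: "'n set \<Rightarrow> 'a^'n \<Rightarrow> 'a^'n \<Rightarrow> 'a^'n" where
  "vec_merge S s c = (\<chi> k. if k \<in> S then s $ k else c $ k)"

definition vec_upd :: "'a^'n \<Rightarrow> 'n \<Rightarrow> 'a \<Rightarrow> 'a^'n" where
  "vec_upd c i x = (\<chi> k. if k = i then x else c $ k)"

context J_module_coset
begin

definition poly_operator :: "(int^'n \<Rightarrow> 'v \<Rightarrow> 'v) \<Rightarrow> bool" where
  "poly_operator g \<longleftrightarrow> (\<exists>A C. finite A \<and> (\<forall>\<alpha>. lin (C \<alpha>) \<and> (\<forall>u\<in>U. C \<alpha> u \<in> U)) \<and>
      (\<forall>s. \<forall>u\<in>U. g s u = (\<Sum>\<alpha>\<in>A. sc (monomial s \<alpha>) (C \<alpha> u))))"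

lemma poly_operator_cong:
  "poly_operator g \<Longrightarrow> (\<And>s u. u \<in> U \<Longrightarrow> h s u = g s u) \<Longrightarrow> poly_operator h"
  unfolding poly_operator_def by metis

lemma poly_operator_zero: "poly_operator (\<lambda>s u. 0)"
  unfolding poly_operator_def
  by (intro exI[of _ "{}"] exI[of _ "\<lambda>_ _. 0"]) (auto simp: endo.linear_zero)

lemma poly_operator_monomial:
  "lin Y \<Longrightarrow> (\<And>u. u \<in> U \<Longrightarrow> Y u \<in> U) \<Longrightarrow> poly_operator (\<lambda>s u. sc (monomial s \<gamma>) (Y u))"
  unfolding poly_operator_def by (intro exI[of _ "{\<gamma>}"] exI[of _ "\<lambda>_. Y"]) auto

lemma poly_operator_add:
  assumes "poly_operator g" "poly_operator h"
  shows "poly_operator (\<lambda>s u. g s u + h s u)"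
proof -
  obtain A1 X1 where 1: "finite A1" "\<forall>\<alpha>. lin (X1 \<alpha>) \<and> (\<forall>u\<in>U. X1 \<alpha> u \<in> U)"
    "\<forall>s. \<forall>u\<in>U. g s u = (\<Sum>\<alpha>\<in>A1. sc (monomial s \<alpha>) (X1 \<alpha> u))"
    using assms(1) poly_operator_def by blast
  obtain A2 X2 where 2: "finite A2" "\<forall>\<alpha>. lin (X2 \<alpha>) \<and> (\<forall>u\<in>U. X2 \<alpha> u \<in> U)"
    "\<forall>s. \<forall>u\<in>U. h s u = (\<Sum>\<alpha>\<in>A2. sc (monomial s \<alpha>) (X2 \<alpha> u))"
    using assms(2) poly_operator_def by blast
  define Y1 where "Y1 \<alpha> = (if \<alpha> \<in> A1 then X1 \<alpha> else (\<lambda>u. 0))" for \<alpha>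
  define Y2 where "Y2 \<alpha> = (if \<alpha> \<in> A2 then X2 \<alpha> else (\<lambda>u. 0))" for \<alpha>
  define X where "X \<alpha> u = Y1 \<alpha> u + Y2 \<alpha> u" for \<alpha> u
  have X: "lin (X \<alpha>) \<and> (\<forall>u\<in>U. X \<alpha> u \<in> U)" for \<alpha>
    unfolding X_def Y1_def Y2_def using 1(2) 2(2)
    by (auto intro!: endo.linear_compose_add endo.linear_zero subspace_add[OF subspace_U]
        simp: subspace_0[OF subspace_U])
  have "g s u + h s u = (\<Sum>\<alpha>\<in>A1 \<union> A2. sc (monomial s \<alpha>) (X \<alpha> u))" if "u \<in> U" for s u
  proof -
    have "(\<Sum>\<alpha>\<in>A1 \<union> A2. sc (monomial s \<alpha>) (Y1 \<alpha> u)) = (\<Sum>\<alpha>\<in>A1. sc (monomial s \<alpha>) (X1 \<alpha> u))"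
      by (rule sum.mono_neutral_cong_right) (use 1 2 in \<open>auto simp: Y1_def\<close>)
    moreover have "(\<Sum>\<alpha>\<in>A1 \<union> A2. sc (monomial s \<alpha>) (Y2 \<alpha> u)) = (\<Sum>\<alpha>\<in>A2. sc (monomial s \<alpha>) (X2 \<alpha> u))"
      by (rule sum.mono_neutral_cong_right) (use 1 2 in \<open>auto simp: Y2_def\<close>)
    ultimately show ?thesis
      using 1(3) 2(3) that by (simp add: X_def scale_right_distrib sum.distrib)
  qed
  then show ?thesis
    unfolding poly_operator_def using 1(1) 2(1) X by (intro exI[of _ "A1 \<union> A2"] exI[of _ X]) auto
qed

lemma poly_operator_sum:
  "finite I \<Longrightarrow> (\<And>i. i \<in> I \<Longrightarrow> poly_operator (g i)) \<Longrightarrow> poly_operator (\<lambda>s u. \<Sum>i\<in>I. g i s u)"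
  by (induction I rule: finite_induct) (auto intro: poly_operator_add poly_operator_zero)

lemma poly_operator_scale:
  assumes "poly_operator g"
  shows "poly_operator (\<lambda>s u. sc c (g s u))"
proof -
  obtain A X where X: "finite A" "\<forall>\<alpha>. lin (X \<alpha>) \<and> (\<forall>u\<in>U. X \<alpha> u \<in> U)"
    "\<forall>s. \<forall>u\<in>U. g s u = (\<Sum>\<alpha>\<in>A. sc (monomial s \<alpha>) (X \<alpha> u))"
    using assms poly_operator_def by blast
  have "poly_operator (\<lambda>s u. \<Sum>\<alpha>\<in>A. sc (monomial s \<alpha>) (sc c (X \<alpha> u)))"
    using X by (intro poly_operator_sum poly_operator_monomial endo.linear_compose_scale_right
        subspace_scale[OF subspace_U]) auto
  then show ?thesis
    by (rule poly_operator_cong) (simp add: X(3) scale_sum_right scale_scale mult.commute)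
qed

lemma poly_operator_times_coordinate:
  assumes "poly_operator g"
  shows "poly_operator (\<lambda>s u. sc (of_int (s $ i)) (g s u))"
proof -
  obtain A X where X: "finite A" "\<forall>\<alpha>. lin (X \<alpha>) \<and> (\<forall>u\<in>U. X \<alpha> u \<in> U)"
    "\<forall>s. \<forall>u\<in>U. g s u = (\<Sum>\<alpha>\<in>A. sc (monomial s \<alpha>) (X \<alpha> u))"
    using assms poly_operator_def by blast
  have mono: "monomial s (\<alpha> + axis i 1) = of_int (s $ i) * monomial s \<alpha>" for s \<alpha>
    by (simp only: monomial_add monomial_axis mult.commute)
  have "poly_operator (\<lambda>s u. \<Sum>\<alpha>\<in>A. sc (monomial s (\<alpha> + axis i 1)) (X \<alpha> u))"
    using X by (intro poly_operator_sum poly_operator_monomial) auto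
  then show ?thesis
    by (rule poly_operator_cong) (simp only: mono, simp add: X(3) scale_sum_right scale_scale)
qed

lemma poly_operator_times_poly:
  assumes "poly_operator g"
  shows "poly_operator (\<lambda>s u. sc (poly q (of_int (s $ i))) (g s u))"
proof (induction q rule: pCons_induct)
  case 0
  show ?case by (rule poly_operator_cong[OF poly_operator_zero]) simp
next
  case (pCons c q)
  have "poly_operator (\<lambda>s u. sc c (g s u) + sc (of_int (s $ i)) (sc (poly q (of_int (s $ i))) (g s u)))"
    by (intro poly_operator_add poly_operator_scale poly_operator_times_coordinate assms pCons.IH)
  then show ?case
    by (rule poly_operator_cong) (simp add: scale_left_distrib)
qed

lemma poly_operator_times_gchoose:
  "poly_operator g \<Longrightarrow> poly_operator (\<lambda>s u. sc (of_int (s $ i) gchoose b) (g s u))"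
  unfolding gbinomial_eq_poly by (rule poly_operator_times_poly)

lemma Dop_newton_expansion:
  assumes "difference_vanishes N j i" "i \<notin> S" "u \<in> U"
  shows "Dop E D j (vec_merge (insert i S) s c) u = (\<Sum>b<N. sc (of_int (s $ i) gchoose b)
      (shift_eval (\<lambda>t. Dop E D j (vec_merge S s (vec_upd c i t)) u) 0 ([:-1, 1:] ^ b)))"
proof -
  define g where "g = (\<lambda>t. Dop E D j (vec_merge S s (vec_upd c i t)) u)"
  have "g = (\<lambda>x. Dop E D j (vec_merge S s (vec_upd c i 0) + axis i x) u)"
    unfolding g_def using assms(2)
    by (intro ext arg_cong[where f = "\<lambda>z. Dop E D j z u"])
      (auto simp: vec_merge_def vec_upd_def axis_def vec_eq_iff)
  then have "\<forall>a. shift_eval g a ([:-1, 1:] ^ N) = 0"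
    using assms(1,3) unfolding difference_vanishes_def by simp
  from newton_forward_difference[OF this, of "s $ i"]
  have "g (s $ i) = (\<Sum>b<N. sc (of_int (s $ i) gchoose b) (shift_eval g 0 ([:-1, 1:] ^ b)))" .
  moreover have "g (s $ i) = Dop E D j (vec_merge (insert i S) s c) u"
    unfolding g_def
    by (intro arg_cong[where f = "\<lambda>z. Dop E D j z u"]) (auto simp: vec_merge_def vec_upd_def vec_eq_iff)
  ultimately show ?thesis by (simp add: g_def)
qed

text \<open>Induction over the set \<open>S\<close> of coordinates in which \<open>D\<^sub>j(s)\<close> is already known to be
  polynomial: the next coordinate is handled by Newton's formula, since the \<open>N\<close>-th difference in
  that direction vanishes.\<close>

lemma Dop_poly_operator: "poly_operator (Dop E D j)"
proof -
  obtain N where N: "\<And>i j. difference_vanishes N j i"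
    using uniform_difference_vanishes by blast
  have "poly_operator (\<lambda>s. Dop E D j (vec_merge S s c))" if "finite S" for S c
    using that
  proof (induction S arbitrary: c rule: finite_induct)
    case empty
    show ?case
      unfolding poly_operator_def
      by (intro exI[of _ "{0}"] exI[of _ "\<lambda>_. Dop E D j c"])
        (auto simp: vec_merge_def monomial_0 linear_Dop Dop_in_U)
  next
    case (insert i S)
    have "poly_operator (\<lambda>s u. shift_eval (\<lambda>t. Dop E D j (vec_merge S s (vec_upd c i t)) u) 0 ([:-1, 1:] ^ b))"
      for b
      unfolding shift_eval_def by (intro poly_operator_sum poly_operator_scale insert.IH) simp
    then have "poly_operator (\<lambda>s u. \<Sum>b<N. sc (of_int (s $ i) gchoose b)
        (shift_eval (\<lambda>t. Dop E D j (vec_merge S s (vec_upd c i t)) u) 0 ([:-1, 1:] ^ b)))"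
      by (intro poly_operator_sum poly_operator_times_gchoose) auto
    then show ?case
      by (rule poly_operator_cong) (simp add: Dop_newton_expansion N insert.hyps)
  qed
  from this[of UNIV 0] show ?thesis
    by (simp add: vec_merge_def)
qed

end

context J_module_coset
begin

lemma D_E_basis_expansion:
  assumes B: "independent B" "span B = U" "finite B" and bs: "distinct bs" "set bs = B"
    and A: "finite A" and C: "\<And>\<alpha> u. u \<in> U \<Longrightarrow> C \<alpha> u \<in> U"
    and Dop_C: "\<And>s u. u \<in> U \<Longrightarrow> Dop E D j s u = (\<Sum>\<alpha>\<in>A. sc (monomial s \<alpha>) (C \<alpha> u))"
    and r: "r < length bs"
  shows "D j s (E m (bs ! r)) = (\<Sum>l<length bs. sc (of_int (m $ j) * (if r = l then 1 else 0)
      + (\<Sum>\<alpha>\<in>A. monomial s \<alpha> * representation B (C \<alpha> (bs ! r)) (bs ! l))) (E (m + s) (bs ! l)))"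
proof -
  have expand: "w = (\<Sum>l<length bs. sc (representation B w (bs ! l)) (bs ! l))" if "w \<in> U" for w
  proof -
    have "w = (\<Sum>b\<in>B. sc (representation B w b) b)"
      using sum_representation_eq[OF B(1) _ B(3) subset_refl] that B(2) by simp
    also have "\<dots> = (\<Sum>l<length bs. sc (representation B w (bs ! l)) (bs ! l))"
      unfolding bs(2)[symmetric] sum.distinct_set_conv_list[OF bs(1)] sum_list_sum_nth
      by (simp add: atLeast0LessThan)
    finally show ?thesis .
  qed
  have br: "bs ! r \<in> U" using r bs(2) B(2) nth_mem span_base by blast
  have "(\<Sum>l<length bs. sc (if r = l then 1 else 0) (bs ! l)) = (\<Sum>l<length bs. if r = l then bs ! l else 0)"
    by (rule sum.cong) auto
  also have "\<dots> = bs ! r" using r by (simp add: sum.delta)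
  finally have "bs ! r = (\<Sum>l<length bs. sc (if r = l then 1 else 0) (bs ! l))" ..
  moreover have "Dop E D j s (bs ! r) =
      (\<Sum>l<length bs. sc (\<Sum>\<alpha>\<in>A. monomial s \<alpha> * representation B (C \<alpha> (bs ! r)) (bs ! l)) (bs ! l))"
  proof -
    have "Dop E D j s (bs ! r) =
        (\<Sum>\<alpha>\<in>A. sc (monomial s \<alpha>) (\<Sum>l<length bs. sc (representation B (C \<alpha> (bs ! r)) (bs ! l)) (bs ! l)))"
      unfolding Dop_C[OF br] by (intro sum.cong refl arg_cong[where f = "sc _"] expand C br)
    then show ?thesis
      unfolding scale_sum_right by (subst (asm) sum.swap) (simp add: scale_sum_left scale_scale)
  qed
  ultimately have "sc (of_int (m $ j)) (bs ! r) + Dop E D j s (bs ! r) =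
      (\<Sum>l<length bs. sc (of_int (m $ j) * (if r = l then 1 else 0)
        + (\<Sum>\<alpha>\<in>A. monomial s \<alpha> * representation B (C \<alpha> (bs ! r)) (bs ! l))) (bs ! l))"
    by (simp add: scale_sum_right scale_left_distrib sum.distrib)
  then show ?thesis
    using D_E_U[OF br, of j s m] by (simp add: endo.linear_sum[OF linear_E] endo.linear_scale[OF linear_E])
qed

lemma polynomial_module_if_poly_operator:
  assumes "\<And>j. poly_operator (Dop E D j)"
  shows "polynomial_module sc E D"
proof -
  obtain B where B: "finite B" "B \<subseteq> U" "independent B" "span B = U"
    using finite_basis_U by blast
  obtain bs where bs: "distinct bs" "set bs = B"
    using finite_distinct_list[OF B(1)] by blast
  have "\<forall>j. \<exists>A C. finite A \<and> (\<forall>\<alpha>. \<forall>u\<in>U. C \<alpha> u \<in> U) \<and>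
      (\<forall>s. \<forall>u\<in>U. Dop E D j s u = (\<Sum>\<alpha>\<in>A. sc (monomial s \<alpha>) (C \<alpha> u)))"
  proof
    fix j
    obtain A C where "finite A" "\<forall>\<alpha>. lin (C \<alpha>) \<and> (\<forall>u\<in>U. C \<alpha> u \<in> U)"
      "\<forall>s. \<forall>u\<in>U. Dop E D j s u = (\<Sum>\<alpha>\<in>A. sc (monomial s \<alpha>) (C \<alpha> u))"
      using assms[of j] unfolding poly_operator_def by auto
    then show "\<exists>A C. finite A \<and> (\<forall>\<alpha>. \<forall>u\<in>U. C \<alpha> u \<in> U) \<and>
        (\<forall>s. \<forall>u\<in>U. Dop E D j s u = (\<Sum>\<alpha>\<in>A. sc (monomial s \<alpha>) (C \<alpha> u)))"
      by (intro exI[of _ A] exI[of _ C]) auto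
  qed
  then have "\<exists>A. \<forall>j. \<exists>C. finite (A j) \<and> (\<forall>\<alpha>. \<forall>u\<in>U. C \<alpha> u \<in> U) \<and>
      (\<forall>s. \<forall>u\<in>U. Dop E D j s u = (\<Sum>\<alpha>\<in>A j. sc (monomial s \<alpha>) (C \<alpha> u)))"
    by (rule choice)
  then obtain A where "\<forall>j. \<exists>C. finite (A j) \<and> (\<forall>\<alpha>. \<forall>u\<in>U. C \<alpha> u \<in> U) \<and>
      (\<forall>s. \<forall>u\<in>U. Dop E D j s u = (\<Sum>\<alpha>\<in>A j. sc (monomial s \<alpha>) (C \<alpha> u)))" ..
  then have "\<exists>C. \<forall>j. finite (A j) \<and> (\<forall>\<alpha>. \<forall>u\<in>U. C j \<alpha> u \<in> U) \<and>
      (\<forall>s. \<forall>u\<in>U. Dop E D j s u = (\<Sum>\<alpha>\<in>A j. sc (monomial s \<alpha>) (C j \<alpha> u)))"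
    by (rule choice)
  then obtain C where AC: "\<forall>j. finite (A j) \<and> (\<forall>\<alpha>. \<forall>u\<in>U. C j \<alpha> u \<in> U) \<and>
      (\<forall>s. \<forall>u\<in>U. Dop E D j s u = (\<Sum>\<alpha>\<in>A j. sc (monomial s \<alpha>) (C j \<alpha> u)))" ..
  define f where "f j r l s m = of_int (m $ j) * (if r = l then 1 else 0)
      + (\<Sum>\<alpha>\<in>A j. monomial s \<alpha> * representation B (C j \<alpha> (bs ! r)) (bs ! l))"
    for j r l and s m :: "int^'n"
  have "D j s (E m (bs ! r)) = (\<Sum>l<length bs. sc (f j r l s m) (E (m + s) (bs ! l)))"
    if "r < length bs" for j s m r
    unfolding f_def using AC B bs that by (intro D_E_basis_expansion) auto
  moreover have "poly_fun2 (f j r l)" for j r l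
    unfolding f_def using AC by (intro poly_fun2_diag_plus_monomials) auto
  moreover have "F_basis sc E (set bs)"
    using F_basis_of_basis_U[OF B(2-4)] bs(2) by simp
  ultimately show ?thesis
    unfolding polynomial_module_def using bs(1) by (intro exI[of _ bs] conjI exI[of _ f]) auto
qed

end

theorem theorem2:
  fixes sc :: "complex \<Rightarrow> 'v::ab_group_add \<Rightarrow> 'v"
    and E :: "int^'n \<Rightarrow> 'v \<Rightarrow> 'v"
    and D :: "'n \<Rightarrow> int^'n \<Rightarrow> 'v \<Rightarrow> 'v"
  assumes "cat_J sc E D"
    and "indecomposable sc E D"
  shows "polynomial_module sc E D \<and>
    (\<exists>lam :: complex^'n.
       (\<exists>B. finite B \<and> B \<subseteq> weight_space sc D lam \<and> \<not> module.dependent sc B \<and>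
            module.span sc B = weight_space sc D lam \<and> F_basis sc E B) \<and>
       (\<forall>j s. Dop E D j s ` weight_space sc D lam \<subseteq> weight_space sc D lam) \<and>
       (\<forall>j s m v. v \<in> weight_space sc D lam \<longrightarrow>
          D j s (E m v) = E (m + s) (sc (of_int (m $ j)) v + Dop E D j s v)) \<and>
       (\<forall>j. \<exists>A :: (nat^'n) set. \<exists>C :: nat^'n \<Rightarrow> 'v \<Rightarrow> 'v. finite A \<and>
          (\<forall>\<alpha>. Vector_Spaces.linear sc sc (C \<alpha>) \<and>
                C \<alpha> ` weight_space sc D lam \<subseteq> weight_space sc D lam) \<and>
          (\<forall>s. \<forall>u\<in>weight_space sc D lam. Dop E D j s u = (\<Sum>\<alpha>\<in>A. sc (monomial s \<alpha>) (C \<alpha> u)))) \<and>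
       (\<forall>j. \<forall>u\<in>weight_space sc D lam. Dop E D j 0 u = sc (lam $ j) u))"
proof -
  interpret J_module sc E D
    using assms(1) by (rule J_module.intro)
  obtain lam where lam: "\<forall>\<mu>. W \<mu> \<noteq> {0} \<longrightarrow> (\<exists>m. \<mu> = lam + of_int_vec m)"
    using weights_in_single_coset[OF assms(2)] by blast
  interpret J_module_coset sc E D lam
    using lam by (intro J_module_coset.intro J_module_coset_axioms.intro J_module_axioms) auto
  obtain B where B: "finite B" "B \<subseteq> U" "independent B" "span B = U"
    using finite_basis_U by blast
  show ?thesis
  proof (intro conjI exI[of _ lam])
    show "polynomial_module sc E D"
      using polynomial_module_if_poly_operator[OF Dop_poly_operator] .
    show "\<exists>B. finite B \<and> B \<subseteq> U \<and> independent B \<and> span B = U \<and> F_basis sc E B"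
      using B F_basis_of_basis_U[OF B(2-4)] by blast
    show "\<forall>j s. Dop E D j s ` U \<subseteq> U"
      using Dop_in_U by blast
    show "\<forall>j s m v. v \<in> U \<longrightarrow> D j s (E m v) = E (m + s) (sc (of_int (m $ j)) v + Dop E D j s v)"
      using D_E_U by blast
    show "\<forall>j. \<exists>A C. finite A \<and> (\<forall>\<alpha>. lin (C \<alpha>) \<and> C \<alpha> ` U \<subseteq> U) \<and>
        (\<forall>s. \<forall>u\<in>U. Dop E D j s u = (\<Sum>\<alpha>\<in>A. sc (monomial s \<alpha>) (C \<alpha> u)))"
      using Dop_poly_operator unfolding poly_operator_def image_subset_iff by blast
    show "\<forall>j. \<forall>u\<in>U. Dop E D j 0 u = sc (lam $ j) u"
      using Dop_0 by blast
  qed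
qed

end
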